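(* Let $1\le p<\infty$ and let $X$ be a maximal sequence space. The following are equivalent: (1) $X$ is $p$-convex. (2) There exist a norm $\|\cdot\|_p$ on the sequence space $X_p:=\{\tau\in\ell_\infty:\ |\tau|^{1/p}\in X\}$ and a constant $c>0$ such that for all $\sigma\in X$ \[\frac1c\|\sigma\|_X\le \big\|\,|\sigma|^p\big\|_p^{1/p}\le\|\sigma\|_X .\] (3) There exists a maximal sequence space $Y$ such that $X={\rm ID}\mathcal L(Y,\ell_p)$ as sets, with equivalent norms. Moreover, in this case one can choose $Y={\rm ID}\mathcal L(X,\ell_p)$, and then for every $\sigma\in X$ \[\frac{1}{M^p(X)}\|\sigma\|_X\le \|D_\sigma:Y\to\ell_p\|\le\|\sigma\|_X .\]
   Context: All sequences are scalar sequences indexed by $\mathbb N$; $(e_k)$ denotes the unit vectors, and for a sequence $\sigma$ and $n\in\mathbb N$, $P_n\sigma:=\sum_{k=1}^n\sigma_ke_k$. A maximal sequence space is a Banach space $(X,\|\cdot\|_X)$ of scalar sequences such that: (i) $\ell_1\subset X\subset\ell_\infty$ and $\|e_k\|_X=1$ for all $k$; (ii) if $\sigma\in X$ and $\alpha\in\ell_\infty$ then the pointwise product $\alpha\sigma\in X$ with $\|\alpha\sigma\|_X\le\|\alpha\|_\infty\|\sigma\|_X$; (iii) $\sigma\in X$ if and only if $\sup_n\|P_n\sigma\|_X<\infty$, and in this case $\|\sigma\|_X=\sup_n\|P_n\sigma\|_X$. For $1\le p<\infty$, a maximal sequence space $X$ is $p$-convex if there is $c>0$ such that for all $n$ and $x_1,\dots,x_n\in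 X$, $\|(\sum_{k=1}^n|x_k|^p)^{1/p}\|_X\le c(\sum_{k=1}^n\|x_k\|_X^p)^{1/p}$ (pointwise operations); the least such $c$ is denoted $M^p(X)$. For maximal sequence spaces $X,Y$, ${\rm ID}\mathcal L(X,Y)$ denotes the space of sequences $\sigma$ such that the diagonal operator $D_\sigma(\tau)=(\sigma_k\tau_k)_k$ maps $X$ boundedly into $Y$, normed by the operator norm $\|D_\sigma:X\to Y\|$. $|\sigma|^r$ denotes the sequence $(|\sigma_k|^r)_k$. *)

theory Defs
  imports Complex_Main
begin

type_synonym seq = "nat \<Rightarrow> real"

definition unitvec :: "nat \<Rightarrow> seq" where
  "unitvec k = (\<lambda>j. if j = k then 1 else 0)"

definition trunc :: "nat \<Rightarrow> seq \<Rightarrow> seq" where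
  "trunc n \<sigma> = (\<lambda>k. if k < n then \<sigma> k else 0)"

definition ell1 :: "seq set" where
  "ell1 = {\<sigma>. summable (\<lambda>k. \<bar>\<sigma> k\<bar>)}"

definition ellinf :: "seq set" where
  "ellinf = {\<sigma>. bdd_above (range (\<lambda>k. \<bar>\<sigma> k\<bar>))}"

definition supnorm :: "seq \<Rightarrow> real" where
  "supnorm \<alpha> = (SUP k. \<bar>\<alpha> k\<bar>)"

definition ellp :: "real \<Rightarrow> seq set" where
  "ellp p = {\<sigma>. summable (\<lambda>k. \<bar>\<sigma> k\<bar> powr p)}"

definition ellp_norm :: "real \<Rightarrow> seq \<Rightarrow> real" where
  "ellp_norm p \<sigma> = (\<Sum>k. \<bar>\<sigma> k\<bar> powr p) powr (1 / p)"

definition normed_seq_space :: "seq set \<Rightarrow> (seq \<Rightarrow> real) \<Rightarrow> bool" where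
  "normed_seq_space S N \<longleftrightarrow>
     (\<lambda>k. 0) \<in> S \<and> (\<forall>x\<in>S. \<forall>y\<in>S. (\<lambda>k. x k + y k) \<in> S) \<and> (\<forall>c::real. \<forall>x\<in>S. (\<lambda>k. c * x k) \<in> S) \<and>
     (\<forall>x\<in>S. 0 \<le> N x) \<and> (\<forall>x\<in>S. N x = 0 \<longleftrightarrow> x = (\<lambda>k. 0)) \<and>
     (\<forall>c::real. \<forall>x\<in>S. N (\<lambda>k. c * x k) = \<bar>c\<bar> * N x) \<and>
     (\<forall>x\<in>S. \<forall>y\<in>S. N (\<lambda>k. x k + y k) \<le> N x + N y)"

definition banach_seq_space :: "seq set \<Rightarrow> (seq \<Rightarrow> real) \<Rightarrow> bool" where
  "banach_seq_space S N \<longleftrightarrow> normed_seq_space S N \<and>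
     (\<forall>x :: nat \<Rightarrow> seq. (\<forall>n. x n \<in> S) \<longrightarrow>
        (\<forall>\<epsilon>>0. \<exists>M. \<forall>m\<ge>M. \<forall>n\<ge>M. N (\<lambda>k. x m k - x n k) < \<epsilon>) \<longrightarrow>
        (\<exists>y\<in>S. (\<lambda>n. N (\<lambda>k. x n k - y k)) \<longlonglongrightarrow> 0))"

definition maximal_seq_space :: "seq set \<Rightarrow> (seq \<Rightarrow> real) \<Rightarrow> bool" where
  "maximal_seq_space X N \<longleftrightarrow>
     banach_seq_space X N \<and>
     ell1 \<subseteq> X \<and> X \<subseteq> ellinf \<and> (\<forall>k. N (unitvec k) = 1) \<and>
     (\<forall>\<sigma>\<in>X. \<forall>\<alpha>\<in>ellinf. (\<lambda>k. \<alpha> k * \<sigma> k) \<in> X \<and> N (\<lambda>k. \<alpha> k * \<sigma> k) \<le> supnorm \<alpha> * N \<sigma>) \<and>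
     (\<forall>\<sigma>. \<sigma> \<in> X \<longleftrightarrow> bdd_above (range (\<lambda>n. N (trunc n \<sigma>)))) \<and>
     (\<forall>\<sigma>\<in>X. N \<sigma> = (SUP n. N (trunc n \<sigma>)))"

definition pconv_ineq :: "seq set \<Rightarrow> (seq \<Rightarrow> real) \<Rightarrow> real \<Rightarrow> real \<Rightarrow> bool" where
  "pconv_ineq X N p c \<longleftrightarrow>
     (\<forall>n. \<forall>x :: nat \<Rightarrow> seq. (\<forall>k<n. x k \<in> X) \<longrightarrow>
        (\<lambda>j. (\<Sum>k<n. \<bar>x k j\<bar> powr p) powr (1 / p)) \<in> X \<and>
        N (\<lambda>j. (\<Sum>k<n. \<bar>x k j\<bar> powr p) powr (1 / p)) \<le> c * (\<Sum>k<n. N (x k) powr p) powr (1 / p))"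

definition p_convex :: "seq set \<Rightarrow> (seq \<Rightarrow> real) \<Rightarrow> real \<Rightarrow> bool" where
  "p_convex X N p \<longleftrightarrow> (\<exists>c>0. pconv_ineq X N p c)"

definition pconv_const :: "seq set \<Rightarrow> (seq \<Rightarrow> real) \<Rightarrow> real \<Rightarrow> real" where
  "pconv_const X N p = Inf {c. c > 0 \<and> pconv_ineq X N p c}"

definition diag_ops :: "seq set \<Rightarrow> (seq \<Rightarrow> real) \<Rightarrow> seq set \<Rightarrow> (seq \<Rightarrow> real) \<Rightarrow> seq set" where
  "diag_ops X NX Y NY = {\<sigma>. (\<forall>\<tau>\<in>X. (\<lambda>k. \<sigma> k * \<tau> k) \<in> Y) \<and>
        (\<exists>C. \<forall>\<tau>\<in>X. NY (\<lambda>k. \<sigma> k * \<tau> k) \<le> C * NX \<tau>)}"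

definition diag_norm :: "seq set \<Rightarrow> (seq \<Rightarrow> real) \<Rightarrow> (seq \<Rightarrow> real) \<Rightarrow> seq \<Rightarrow> real" where
  "diag_norm X NX NY \<sigma> = Sup {NY (\<lambda>k. \<sigma> k * \<tau> k) | \<tau>. \<tau> \<in> X \<and> NX \<tau> \<le> 1}"

definition Xp :: "seq set \<Rightarrow> real \<Rightarrow> seq set" where
  "Xp X p = {\<tau> \<in> ellinf. (\<lambda>k. \<bar>\<tau> k\<bar> powr (1 / p)) \<in> X}"

end

theory Submission
  imports Defs "HOL-Analysis.Convex"
begin

text \<open>
  (1) \<open>\<Rightarrow>\<close> (2): on \<open>X\<^sub>p\<close> take \<open>\<parallel>u\<parallel>\<^sub>p = inf {\<Sum>\<^sub>k N(x\<^sub>k)\<^sup>p : \<bar>u\<bar> \<le> \<Sum>\<^sub>k \<bar>x\<^sub>k\<bar>\<^sup>p}\<close>. The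
  one-term cover \<open>\<bar>u\<bar>\<^sup>1\<^sup>/\<^sup>p\<close> gives the upper bound, \<open>p\<close>-convexity of \<open>X\<close> the lower one.
  (2) \<open>\<Rightarrow>\<close> (1): apply the triangle inequality of \<open>\<parallel>\<cdot>\<parallel>\<^sub>p\<close> to \<open>\<Sum>\<^sub>k \<bar>x\<^sub>k\<bar>\<^sup>p\<close>.

  (3) \<open>\<Rightarrow>\<close> (1): for every \<open>Y\<close>, the space \<open>ID\<L>(Y, \<ell>\<^sub>p)\<close> with the operator norm is
  \<open>p\<close>-convex with constant \<open>1\<close>, because \<open>\<parallel>(\<Sum>\<^sub>k \<bar>x\<^sub>k\<bar>\<^sup>p)\<^sup>1\<^sup>/\<^sup>p \<tau>\<parallel>\<^sub>p\<^sup>p = \<Sum>\<^sub>k \<parallel>x\<^sub>k \<tau>\<parallel>\<^sub>p\<^sup>p\<close>; an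
  equivalent norm only changes the constant.

  (1) \<open>\<Rightarrow>\<close> (3) with \<open>Y = ID\<L>(X, \<ell>\<^sub>p)\<close>: \<open>Y\<close> is maximal (its completeness comes from its
  Fatou property) and \<open>\<parallel>D\<^sub>\<sigma> : Y \<rightarrow> \<ell>\<^sub>p\<parallel> \<le> N(\<sigma>)\<close> is immediate. For the reverse estimate
  \<open>N(\<sigma>) \<le> c \<parallel>D\<^sub>\<sigma>\<parallel>\<close> with \<open>\<sigma>\<close> finitely supported, a finite-dimensional Hahn--Banach theorem
  gives a linear functional \<open>w \<le> \<parallel>\<cdot>\<parallel>\<^sub>p\<close> norming \<open>\<bar>\<sigma>\<bar>\<^sup>p\<close>; then \<open>\<tau> = \<bar>w\<bar>\<^sup>1\<^sup>/\<^sup>p\<close> lies in the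
  unit ball of \<open>Y\<close> and \<open>\<parallel>\<sigma> \<tau>\<parallel>\<^sub>p\<^sup>p \<ge> \<parallel>\<bar>\<sigma>\<bar>\<^sup>p\<parallel>\<^sub>p \<ge> (N(\<sigma>) / c)\<^sup>p\<close>. The Fatou property of \<open>X\<close>
  extends the estimate to all \<open>\<sigma>\<close>, and the infimum over admissible \<open>c\<close> is \<open>M\<^sup>p(X)\<close>.
\<close>

section \<open>Normed ideal spaces of sequences\<close>

definition ellinf_ideal :: "seq set \<Rightarrow> (seq \<Rightarrow> real) \<Rightarrow> bool" where
  "ellinf_ideal X N \<longleftrightarrow> (\<forall>\<sigma>\<in>X. \<forall>\<alpha>\<in>ellinf.
     (\<lambda>k. \<alpha> k * \<sigma> k) \<in> X \<and> N (\<lambda>k. \<alpha> k * \<sigma> k) \<le> supnorm \<alpha> * N \<sigma>)"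

definition fatou_property :: "seq set \<Rightarrow> (seq \<Rightarrow> real) \<Rightarrow> bool" where
  "fatou_property X N \<longleftrightarrow> (\<forall>\<sigma>. \<sigma> \<in> X \<longleftrightarrow> bdd_above (range (\<lambda>n. N (trunc n \<sigma>)))) \<and>
     (\<forall>\<sigma>\<in>X. N \<sigma> = (SUP n. N (trunc n \<sigma>)))"

lemma maximal_seq_space_iff:
  "maximal_seq_space X N \<longleftrightarrow> banach_seq_space X N \<and> ell1 \<subseteq> X \<and> X \<subseteq> ellinf \<and>
     (\<forall>k. N (unitvec k) = 1) \<and> ellinf_ideal X N \<and> fatou_property X N"
  unfolding maximal_seq_space_def ellinf_ideal_def fatou_property_def by blast

lemma finite_support_ell1: "(\<And>k. k \<ge> n \<Longrightarrow> x k = 0) \<Longrightarrow> x \<in> ell1"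
  unfolding ell1_def by (auto intro!: summable_finite[of "{..<n}"]) (meson not_le)

lemma unitvec_ell1: "unitvec k \<in> ell1"
  by (rule finite_support_ell1[of "Suc k"]) (simp add: unitvec_def)

lemma ellinfI: "(\<And>k. \<bar>\<alpha> k\<bar> \<le> C) \<Longrightarrow> \<alpha> \<in> ellinf"
  unfolding ellinf_def by (intro CollectI bdd_aboveI[of _ C]) auto

lemma ellinfE: "\<alpha> \<in> ellinf \<Longrightarrow> (\<And>C. (\<And>k. \<bar>\<alpha> k\<bar> \<le> C) \<Longrightarrow> thesis) \<Longrightarrow> thesis"
  unfolding ellinf_def bdd_above_def by auto

lemma supnorm_le: "(\<And>k. \<bar>\<alpha> k\<bar> \<le> C) \<Longrightarrow> supnorm \<alpha> \<le> C"
  unfolding supnorm_def by (rule cSUP_least) auto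

lemma abs_le_supnorm: "\<alpha> \<in> ellinf \<Longrightarrow> \<bar>\<alpha> k\<bar> \<le> supnorm \<alpha>"
  unfolding supnorm_def ellinf_def by (rule cSUP_upper) auto

lemma normed_seq_space_sum:
  assumes S: "normed_seq_space S M" and u: "\<And>k. k < (n::nat) \<Longrightarrow> u k \<in> S"
  shows "(\<lambda>j. \<Sum>k<n. u k j) \<in> S" "M (\<lambda>j. \<Sum>k<n. u k j) \<le> (\<Sum>k<n. M (u k))"
proof -
  have "(\<lambda>j. \<Sum>k<n. u k j) \<in> S \<and> M (\<lambda>j. \<Sum>k<n. u k j) \<le> (\<Sum>k<n. M (u k))"
    using u
  proof (induction n)
    case 0
    have "(\<lambda>k. 0) \<in> S" "M (\<lambda>k. 0) = 0" using S unfolding normed_seq_space_def by blast+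
    then show ?case by simp
  next
    case (Suc n)
    then have IH: "(\<lambda>j. \<Sum>k<n. u k j) \<in> S" "M (\<lambda>j. \<Sum>k<n. u k j) \<le> (\<Sum>k<n. M (u k))"
      and un: "u n \<in> S" by auto
    have "\<forall>x\<in>S. \<forall>y\<in>S. (\<lambda>k. x k + y k) \<in> S \<and> M (\<lambda>k. x k + y k) \<le> M x + M y"
      using S unfolding normed_seq_space_def by blast
    then show ?case using IH un by fastforce
  qed
  then show "(\<lambda>j. \<Sum>k<n. u k j) \<in> S" "M (\<lambda>j. \<Sum>k<n. u k j) \<le> (\<Sum>k<n. M (u k))" by auto
qed

locale normed_ideal_space =
  fixes X :: "seq set" and N :: "seq \<Rightarrow> real"
  assumes normed: "normed_seq_space X N"
    and ideal: "ellinf_ideal X N"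
    and unitvec_mem: "\<And>k. unitvec k \<in> X"
    and norm_unitvec: "\<And>k. N (unitvec k) = 1"
begin

lemma zero_mem: "(\<lambda>k. 0) \<in> X"
  and add_mem: "x \<in> X \<Longrightarrow> y \<in> X \<Longrightarrow> (\<lambda>k. x k + y k) \<in> X"
  and scale_mem: "x \<in> X \<Longrightarrow> (\<lambda>k. c * x k) \<in> X"
  and norm_nonneg: "x \<in> X \<Longrightarrow> 0 \<le> N x"
  and norm_eq_zero_iff: "x \<in> X \<Longrightarrow> N x = 0 \<longleftrightarrow> x = (\<lambda>k. 0)"
  and norm_scale: "x \<in> X \<Longrightarrow> N (\<lambda>k. c * x k) = \<bar>c\<bar> * N x"
  and norm_triangle: "x \<in> X \<Longrightarrow> y \<in> X \<Longrightarrow> N (\<lambda>k. x k + y k) \<le> N x + N y"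
  using normed unfolding normed_seq_space_def by blast+

lemma norm_zero: "N (\<lambda>k. 0) = 0"
  using norm_eq_zero_iff zero_mem by blast

lemma diff_mem: "x \<in> X \<Longrightarrow> y \<in> X \<Longrightarrow> (\<lambda>k. x k - y k) \<in> X"
  using add_mem[of x "\<lambda>k. (-1) * y k"] scale_mem[of y "-1"] by simp

lemma solid:
  assumes x: "x \<in> X" and le: "\<And>k. \<bar>y k\<bar> \<le> \<bar>x k\<bar>"
  shows "y \<in> X" "N y \<le> N x"
proof -
  define \<alpha> where "\<alpha> = (\<lambda>k. if x k = 0 then 0 else y k / x k)"
  have \<alpha>_le: "\<bar>\<alpha> k\<bar> \<le> 1" for k
    using le[of k] by (auto simp: \<alpha>_def abs_divide divide_le_eq_1)
  have y_eq: "y = (\<lambda>k. \<alpha> k * x k)"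
  proof
    show "y k = \<alpha> k * x k" for k using le[of k] by (cases "x k = 0") (auto simp: \<alpha>_def)
  qed
  have "(\<lambda>k. \<alpha> k * x k) \<in> X" "N (\<lambda>k. \<alpha> k * x k) \<le> supnorm \<alpha> * N x"
    using ideal x ellinfI[OF \<alpha>_le] unfolding ellinf_ideal_def by auto
  moreover have "supnorm \<alpha> \<le> 1" by (rule supnorm_le[OF \<alpha>_le])
  ultimately show "y \<in> X" "N y \<le> N x"
    using y_eq mult_right_mono[OF _ norm_nonneg[OF x], of "supnorm \<alpha>" 1] by auto
qed

lemma abs_mem: "x \<in> X \<Longrightarrow> (\<lambda>k. \<bar>x k\<bar>) \<in> X"
  by (rule solid) auto

lemma norm_abs: "x \<in> X \<Longrightarrow> N (\<lambda>k. \<bar>x k\<bar>) = N x"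
  using solid(2)[of x "\<lambda>k. \<bar>x k\<bar>"] solid(2)[OF abs_mem, of x x] by fastforce

lemma abs_le_norm:
  assumes "x \<in> X"
  shows "\<bar>x k\<bar> \<le> N x"
proof -
  have "N (\<lambda>j. x k * unitvec k j) = \<bar>x k\<bar>"
    using norm_scale[OF unitvec_mem] norm_unitvec by simp
  moreover have "N (\<lambda>j. x k * unitvec k j) \<le> N x"
    by (rule solid[OF assms]) (auto simp: unitvec_def)
  ultimately show ?thesis by simp
qed

lemma subset_ellinf: "X \<subseteq> ellinf"
  using abs_le_norm by (blast intro: ellinfI)

lemma trunc_Suc: "trunc (Suc n) x = (\<lambda>k. trunc n x k + x n * unitvec n k)"
  by (auto simp: trunc_def unitvec_def fun_eq_iff less_Suc_eq)

lemma trunc_mem: "trunc n x \<in> X"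
  and norm_trunc_le_sum: "N (trunc n x) \<le> (\<Sum>k<n. \<bar>x k\<bar>)"
proof -
  have "trunc n x \<in> X \<and> N (trunc n x) \<le> (\<Sum>k<n. \<bar>x k\<bar>)"
  proof (induction n)
    case 0
    then show ?case using zero_mem norm_zero by (simp add: trunc_def)
  next
    case (Suc n)
    have e: "(\<lambda>k. x n * unitvec n k) \<in> X" "N (\<lambda>k. x n * unitvec n k) = \<bar>x n\<bar>"
      using scale_mem[OF unitvec_mem] norm_scale[OF unitvec_mem] norm_unitvec by auto
    then show ?case
      using Suc add_mem norm_triangle[OF _ e(1), of "trunc n x"] unfolding trunc_Suc by fastforce
  qed
  then show "trunc n x \<in> X" "N (trunc n x) \<le> (\<Sum>k<n. \<bar>x k\<bar>)" by auto
qed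

lemma norm_trunc_le: "x \<in> X \<Longrightarrow> N (trunc n x) \<le> N x"
  by (rule solid) (auto simp: trunc_def)

lemma fatou_bound:
  assumes fatou: "fatou_property X N" and bound: "\<And>n. N (trunc n z) \<le> C"
  shows "z \<in> X" "N z \<le> C"
proof -
  have "bdd_above (range (\<lambda>n. N (trunc n z)))" using bound by (intro bdd_aboveI2) auto
  then show z: "z \<in> X" using fatou unfolding fatou_property_def by blast
  have "N z = (SUP n. N (trunc n z))" using fatou z unfolding fatou_property_def by blast
  also have "\<dots> \<le> C" by (rule cSUP_least) (use bound in auto)
  finally show "N z \<le> C" .
qed

lemma Cauchy_coordinate:
  assumes xX: "\<And>n. x n \<in> X"
    and Cauchy: "\<forall>\<epsilon>>0. \<exists>M. \<forall>m\<ge>M. \<forall>n\<ge>M. N (\<lambda>k. x m k - x n k) < \<epsilon>"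
  shows "Cauchy (\<lambda>m. x m k)"
proof (rule CauchyI)
  fix \<epsilon> :: real assume "0 < \<epsilon>"
  then obtain M where M: "\<forall>m\<ge>M. \<forall>n\<ge>M. N (\<lambda>k. x m k - x n k) < \<epsilon>" using Cauchy by blast
  have "\<bar>x m k - x n k\<bar> < \<epsilon>" if "M \<le> m" "M \<le> n" for m n
    using M that abs_le_norm[OF diff_mem[OF xX[of m] xX[of n]], of k] by force
  then show "\<exists>M. \<forall>m\<ge>M. \<forall>n\<ge>M. norm (x m k - x n k) < \<epsilon>" by auto
qed

text \<open>Every truncation of \<open>x m - y\<close> is a limit of truncations of \<open>x m - x n\<close>, so the Fatou
  property passes the Cauchy bound on to \<open>x m - y\<close>.\<close>

lemma fatou_Cauchy_limit:
  assumes fatou: "fatou_property X N" and xX: "\<And>n. x n \<in> X"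
    and M: "\<forall>m\<ge>M. \<forall>n\<ge>M. N (\<lambda>k. x m k - x n k) < \<epsilon>"
    and lim: "\<And>k. (\<lambda>n. x n k) \<longlonglongrightarrow> y k" and m: "M \<le> m"
  shows "(\<lambda>k. x m k - y k) \<in> X" "N (\<lambda>k. x m k - y k) \<le> \<epsilon>"
proof -
  have "N (trunc J (\<lambda>k. x m k - y k)) \<le> \<epsilon>" for J
  proof -
    define g where "g n = (\<Sum>k<J. \<bar>x n k - y k\<bar>)" for n
    have g: "g \<longlonglongrightarrow> 0"
      unfolding g_def using tendsto_sum[of "{..<J}" "\<lambda>k n. \<bar>x n k - y k\<bar>" "\<lambda>k. 0"]
        tendsto_rabs[OF LIM_zero[OF lim]] by simp
    have "N (trunc J (\<lambda>k. x m k - y k)) \<le> \<epsilon> + g n" if n: "M \<le> n" for n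
    proof -
      have "trunc J (\<lambda>k. x m k - y k) =
          (\<lambda>k. trunc J (\<lambda>k. x m k - x n k) k + trunc J (\<lambda>k. x n k - y k) k)"
        by (auto simp: trunc_def)
      then have "N (trunc J (\<lambda>k. x m k - y k))
          \<le> N (trunc J (\<lambda>k. x m k - x n k)) + N (trunc J (\<lambda>k. x n k - y k))"
        using norm_triangle trunc_mem by presburger
      also have "\<dots> \<le> \<epsilon> + g n"
        using norm_trunc_le[OF diff_mem[OF xX[of m] xX[of n]], of J] M m n
          norm_trunc_le_sum[of J "\<lambda>k. x n k - y k"]
        by (force simp: g_def)
      finally show ?thesis .
    qed
    then show ?thesis
      using tendsto_add[OF tendsto_const g, of \<epsilon>]
      by (intro tendsto_le[OF trivial_limit_sequentially, of "\<lambda>n. \<epsilon> + g n"])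
        (auto simp: eventually_sequentially)
  qed
  then show "(\<lambda>k. x m k - y k) \<in> X" "N (\<lambda>k. x m k - y k) \<le> \<epsilon>"
    using fatou_bound[OF fatou] by blast+
qed

lemma maximal_if_fatou:
  assumes fatou: "fatou_property X N"
  shows "maximal_seq_space X N"
proof -
  have "x \<in> X" if "x \<in> ell1" for x
  proof -
    have "summable (\<lambda>k. \<bar>x k\<bar>)" using that by (simp add: ell1_def)
    then have "N (trunc n x) \<le> (\<Sum>k. \<bar>x k\<bar>)" for n
      using norm_trunc_le_sum[of n x] sum_le_suminf[of _ "{..<n}"] by force
    then show "x \<in> X" using fatou_bound[OF fatou] by blast
  qed
  moreover have "banach_seq_space X N"
    unfolding banach_seq_space_def
  proof (intro conjI normed allI impI)
    fix x :: "nat \<Rightarrow> seq"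
    assume xX: "\<forall>n. x n \<in> X"
      and Cauchy: "\<forall>\<epsilon>>0. \<exists>M. \<forall>m\<ge>M. \<forall>n\<ge>M. N (\<lambda>k. x m k - x n k) < \<epsilon>"
    define y where "y k = lim (\<lambda>m. x m k)" for k
    have lim: "(\<lambda>m. x m k) \<longlonglongrightarrow> y k" for k
      using Cauchy_coordinate[of x, OF _ Cauchy] xX
      unfolding y_def by (simp add: Cauchy_convergent_iff convergent_LIMSEQ_iff)
    note tail = fatou_Cauchy_limit[OF fatou, of x, OF _ _ lim]
    obtain M where "\<forall>m\<ge>M. \<forall>n\<ge>M. N (\<lambda>k. x m k - x n k) < 1" using Cauchy by force
    then have "(\<lambda>k. x M k - (x M k - y k)) \<in> X" using tail(1) diff_mem xX by blast
    then have "y \<in> X" by simp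
    moreover have "(\<lambda>n. N (\<lambda>k. x n k - y k)) \<longlonglongrightarrow> 0"
    proof (rule LIMSEQ_I)
      fix r :: real assume "0 < r"
      then obtain M where "\<forall>m\<ge>M. \<forall>n\<ge>M. N (\<lambda>k. x m k - x n k) < r / 2"
        using Cauchy half_gt_zero by blast
      then have "norm (N (\<lambda>k. x n k - y k) - 0) < r" if "M \<le> n" for n
        using tail[of M "r / 2" n] xX that \<open>0 < r\<close> norm_nonneg by fastforce
      then show "\<exists>M. \<forall>n\<ge>M. norm (N (\<lambda>k. x n k - y k) - 0) < r" by blast
    qed
    ultimately show "\<exists>y\<in>X. (\<lambda>n. N (\<lambda>k. x n k - y k)) \<longlonglongrightarrow> 0" by blast
  qed
  ultimately show ?thesis
    unfolding maximal_seq_space_iff using subset_ellinf norm_unitvec ideal fatou by blast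
qed

end

section \<open>The spaces \<open>\<ell>\<^sub>p\<close>\<close>

lemma powr_le_powr_iff:
  fixes x y r :: real
  assumes "0 < r" "0 \<le> x" "0 \<le> y"
  shows "x powr r \<le> y powr r \<longleftrightarrow> x \<le> y"
  using assms powr_less_mono2[of r y x] powr_mono2[of r x y] by linarith

lemma powr_inverse_le_iff:
  fixes a p A :: real
  assumes "0 < p" "0 \<le> a" "0 \<le> A"
  shows "a powr (1 / p) \<le> A \<longleftrightarrow> a \<le> A powr p"
  using assms powr_le_powr_iff[of p "a powr (1 / p)" A] by (simp add: powr_powr)

lemma powr_inverse_ge_iff:
  fixes a p A :: real
  assumes "0 < p" "0 \<le> a" "0 \<le> A"
  shows "A \<le> a powr (1 / p) \<longleftrightarrow> A powr p \<le> a"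
  using assms powr_le_powr_iff[of p A "a powr (1 / p)"] by (simp add: powr_powr)

lemma ellp_sum_nonneg: "f \<in> ellp p \<Longrightarrow> 0 \<le> (\<Sum>k. \<bar>f k\<bar> powr p)"
  unfolding ellp_def by (auto intro: suminf_nonneg)

lemma ellp_norm_nonneg: "0 \<le> ellp_norm p f"
  by (simp add: ellp_norm_def)

lemma ellp_norm_powr: "f \<in> ellp p \<Longrightarrow> 0 < p \<Longrightarrow> ellp_norm p f powr p = (\<Sum>k. \<bar>f k\<bar> powr p)"
  unfolding ellp_norm_def by (simp add: powr_powr ellp_sum_nonneg)

lemma ellp_norm_le_iff:
  "f \<in> ellp p \<Longrightarrow> 0 < p \<Longrightarrow> 0 \<le> A \<Longrightarrow> ellp_norm p f \<le> A \<longleftrightarrow> (\<Sum>k. \<bar>f k\<bar> powr p) \<le> A powr p"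
  unfolding ellp_norm_def by (rule powr_inverse_le_iff) (auto intro: ellp_sum_nonneg)

lemma ellp_norm_ge_iff:
  "f \<in> ellp p \<Longrightarrow> 0 < p \<Longrightarrow> 0 \<le> A \<Longrightarrow> A \<le> ellp_norm p f \<longleftrightarrow> A powr p \<le> (\<Sum>k. \<bar>f k\<bar> powr p)"
  unfolding ellp_norm_def by (rule powr_inverse_ge_iff) (auto intro: ellp_sum_nonneg)

lemma ellp_zero: "0 < p \<Longrightarrow> (\<lambda>k. 0) \<in> ellp p \<and> ellp_norm p (\<lambda>k. 0) = 0"
  by (simp add: ellp_def ellp_norm_def)


lemma ellp_finite_support:
  assumes "\<And>k. k \<ge> n \<Longrightarrow> f k = 0" "0 < p"
  shows "f \<in> ellp p" "(\<Sum>k. \<bar>f k\<bar> powr p) = (\<Sum>k<n. \<bar>f k\<bar> powr p)"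
proof -
  have z: "\<bar>f k\<bar> powr p = 0" if "k \<notin> {..<n}" for k using assms that by simp
  show "f \<in> ellp p" unfolding ellp_def using summable_finite[of "{..<n}", OF _ z] by auto
  show "(\<Sum>k. \<bar>f k\<bar> powr p) = (\<Sum>k<n. \<bar>f k\<bar> powr p)"
    using suminf_finite[of "{..<n}", OF _ z] by auto
qed

lemma ellp_scale:
  assumes "f \<in> ellp p" "0 < p"
  shows "(\<lambda>k. c * f k) \<in> ellp p" "ellp_norm p (\<lambda>k. c * f k) = \<bar>c\<bar> * ellp_norm p f"
proof -
  have e: "\<bar>c * f k\<bar> powr p = \<bar>c\<bar> powr p * \<bar>f k\<bar> powr p" for k by (simp add: abs_mult powr_mult)
  have s: "summable (\<lambda>k. \<bar>f k\<bar> powr p)" using assms by (simp add: ellp_def)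
  then show "(\<lambda>k. c * f k) \<in> ellp p" unfolding ellp_def mem_Collect_eq e by (rule summable_mult)
  have "(\<Sum>k. \<bar>c * f k\<bar> powr p) = \<bar>c\<bar> powr p * (\<Sum>k. \<bar>f k\<bar> powr p)"
    unfolding e by (rule suminf_mult[OF s])
  then show "ellp_norm p (\<lambda>k. c * f k) = \<bar>c\<bar> * ellp_norm p f"
    unfolding ellp_norm_def using assms by (simp add: powr_mult powr_powr ellp_sum_nonneg)
qed

lemma ellp_mono:
  assumes "f \<in> ellp p" "0 < p" "\<And>k. \<bar>g k\<bar> \<le> \<bar>f k\<bar>"
  shows "g \<in> ellp p" "ellp_norm p g \<le> ellp_norm p f"
proof -
  have s: "summable (\<lambda>k. \<bar>f k\<bar> powr p)" using assms by (simp add: ellp_def)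
  have le: "\<bar>g k\<bar> powr p \<le> \<bar>f k\<bar> powr p" for k using assms(2,3) by (simp add: powr_mono2)
  have sg: "summable (\<lambda>k. \<bar>g k\<bar> powr p)"
    by (rule summable_comparison_test'[OF s, of 0]) (use le in auto)
  then show "g \<in> ellp p" by (simp add: ellp_def)
  show "ellp_norm p g \<le> ellp_norm p f" unfolding ellp_norm_def
    using suminf_le[OF le sg s] assms(2) suminf_nonneg[OF sg] by (simp add: powr_mono2)
qed

lemma ellpI_partial_sums_bounded:
  assumes "\<And>n. (\<Sum>k<n. \<bar>f k\<bar> powr p) \<le> B"
  shows "f \<in> ellp p" "(\<Sum>k. \<bar>f k\<bar> powr p) \<le> B"
proof -
  have s: "summable (\<lambda>k. \<bar>f k\<bar> powr p)"
    by (rule summableI_nonneg_bounded[where x=B]) (use assms in auto)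
  then show "f \<in> ellp p" by (simp add: ellp_def)
  show "(\<Sum>k. \<bar>f k\<bar> powr p) \<le> B" by (rule suminf_le_const[OF s assms])
qed

lemma ellp_unitvec:
  assumes "0 < p"
  shows "(\<lambda>j. \<sigma> j * unitvec k j) \<in> ellp p" "ellp_norm p (\<lambda>j. \<sigma> j * unitvec k j) = \<bar>\<sigma> k\<bar>"
proof -
  have z: "\<And>j. j \<ge> Suc k \<Longrightarrow> \<sigma> j * unitvec k j = 0" by (simp add: unitvec_def)
  show "(\<lambda>j. \<sigma> j * unitvec k j) \<in> ellp p" using ellp_finite_support(1)[OF z assms] .
  have "(\<Sum>j. \<bar>\<sigma> j * unitvec k j\<bar> powr p) = \<bar>\<sigma> k\<bar> powr p"
    using ellp_finite_support(2)[OF z assms] assms by (simp add: unitvec_def)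
  then show "ellp_norm p (\<lambda>j. \<sigma> j * unitvec k j) = \<bar>\<sigma> k\<bar>"
    unfolding ellp_norm_def using assms by (simp add: powr_powr)
qed


lemma powr_convex_combination_le:
  fixes a b l p :: real
  assumes "1 \<le> p" "0 \<le> a" "0 \<le> b" "0 \<le> l" "l \<le> 1"
  shows "(l * a + (1 - l) * b) powr p \<le> l * a powr p + (1 - l) * b powr p"
proof -
  have small: "(t * x) powr p \<le> t * x powr p" if "0 \<le> t" "t \<le> 1" "0 \<le> x" for t x :: real
  proof -
    have "t powr p \<le> t powr 1" if "0 < t" using that \<open>t \<le> 1\<close> assms(1) by (intro powr_mono') auto
    then have "t powr p \<le> t" using that(1) assms(1) by (cases "t = 0") auto
    then show ?thesis using that by (simp add: powr_mult mult_right_mono)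
  qed
  consider "a = 0" | "b = 0" | "0 < a" "0 < b" using assms by linarith
  then show ?thesis
  proof cases
    case 1 then show ?thesis using small[of "1 - l" b] assms by simp
  next
    case 2 then show ?thesis using small[of l a] assms by simp
  next
    case 3
    then show ?thesis using convex_onD[OF powr_convex[OF assms(1)], of "1 - l" a b] assms
      by (auto simp: algebra_simps)
  qed
qed

lemma abs_add_powr_le_split:
  fixes a b A B p :: real
  assumes p: "1 \<le> p" and A: "0 < A" and B: "0 < B"
  shows "\<bar>a + b\<bar> powr p
    \<le> (A + B) powr p * (A / (A + B) * (\<bar>a\<bar> powr p / A powr p) + B / (A + B) * (\<bar>b\<bar> powr p / B powr p))"
proof -
  define l where "l = A / (A + B)"
  have l: "0 \<le> l" "l \<le> 1" "1 - l = B / (A + B)" using A B by (auto simp: l_def field_simps)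
  have "(A + B) * (l * (\<bar>a\<bar> / A)) = \<bar>a\<bar>" using A B by (simp add: l_def)
  moreover have "(A + B) * ((1 - l) * (\<bar>b\<bar> / B)) = \<bar>b\<bar>" using A B by (simp add: l(3))
  ultimately have "\<bar>a\<bar> + \<bar>b\<bar> = (A + B) * (l * (\<bar>a\<bar> / A) + (1 - l) * (\<bar>b\<bar> / B))"
    by (simp add: distrib_left)
  moreover have "\<bar>a + b\<bar> powr p \<le> (\<bar>a\<bar> + \<bar>b\<bar>) powr p" using p by (intro powr_mono2) auto
  ultimately have "\<bar>a + b\<bar> powr p \<le> (A + B) powr p * (l * (\<bar>a\<bar> / A) + (1 - l) * (\<bar>b\<bar> / B)) powr p"
    using A B l by (simp add: powr_mult)
  also have "\<dots> \<le> (A + B) powr p * (l * (\<bar>a\<bar> / A) powr p + (1 - l) * (\<bar>b\<bar> / B) powr p)"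
    using powr_convex_combination_le[OF p, of "\<bar>a\<bar> / A" "\<bar>b\<bar> / B" l] A B l
    by (intro mult_left_mono) auto
  finally show ?thesis using A B by (simp add: l(3) powr_divide) (simp add: l_def)
qed

text \<open>Summing the pointwise estimate above, with \<open>A\<close> and \<open>B\<close> the norms of \<open>f\<close> and \<open>g\<close>,
  yields \<open>(A + B) powr p\<close>.\<close>

lemma ellp_norm_eq_zero_iff:
  assumes "f \<in> ellp p" "0 < p"
  shows "ellp_norm p f = 0 \<longleftrightarrow> f = (\<lambda>k. 0)"
proof
  assume "ellp_norm p f = 0"
  then have "(\<Sum>k. \<bar>f k\<bar> powr p) = 0" using ellp_norm_powr[OF assms] assms(2) by simp
  moreover have "summable (\<lambda>k. \<bar>f k\<bar> powr p)" using assms(1) by (simp add: ellp_def)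
  ultimately have "\<bar>f k\<bar> powr p = 0" for k using suminf_eq_zero_iff by fastforce
  then show "f = (\<lambda>k. 0)" by (simp add: fun_eq_iff)
qed (use ellp_zero[OF assms(2)] in simp)

lemma ellp_minkowski:
  assumes f: "f \<in> ellp p" and g: "g \<in> ellp p" and p: "1 \<le> p"
  shows "(\<lambda>k. f k + g k) \<in> ellp p" "ellp_norm p (\<lambda>k. f k + g k) \<le> ellp_norm p f + ellp_norm p g"
proof -
  have p0: "0 < p" using p by simp
  define A where "A = ellp_norm p f"
  define B where "B = ellp_norm p g"
  have sf: "summable (\<lambda>k. \<bar>f k\<bar> powr p)" and sg: "summable (\<lambda>k. \<bar>g k\<bar> powr p)"
    using f g by (auto simp: ellp_def)
  have Ap: "A powr p = (\<Sum>k. \<bar>f k\<bar> powr p)" and Bp: "B powr p = (\<Sum>k. \<bar>g k\<bar> powr p)"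
    unfolding A_def B_def using ellp_norm_powr[OF _ p0] f g by auto
  have "(\<lambda>k. f k + g k) \<in> ellp p \<and> ellp_norm p (\<lambda>k. f k + g k) \<le> A + B"
  proof (cases "A = 0 \<or> B = 0")
    case True
    then have "f = (\<lambda>k. 0) \<or> g = (\<lambda>k. 0)"
      using ellp_norm_eq_zero_iff[OF f p0] ellp_norm_eq_zero_iff[OF g p0] unfolding A_def B_def by blast
    then show ?thesis using f g A_def B_def ellp_norm_nonneg by auto
  next
    case False
    then have A0: "0 < A" and B0: "0 < B" by (auto simp: A_def B_def less_le ellp_norm_nonneg)
    define h where "h k = (A + B) powr p *
      (A / (A + B) * (\<bar>f k\<bar> powr p / A powr p) + B / (A + B) * (\<bar>g k\<bar> powr p / B powr p))" for k
    have "(\<lambda>k. \<bar>f k\<bar> powr p / A powr p) sums 1" "(\<lambda>k. \<bar>g k\<bar> powr p / B powr p) sums 1"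
      using sums_divide[OF summable_sums[OF sf], of "A powr p"]
        sums_divide[OF summable_sums[OF sg], of "B powr p"] A0 B0
      unfolding Ap[symmetric] Bp[symmetric] by simp_all
    then have "h sums ((A + B) powr p * (A / (A + B) * 1 + B / (A + B) * 1))"
      unfolding h_def by (intro sums_mult sums_add)
    moreover have "A / (A + B) * 1 + B / (A + B) * 1 = 1"
      using A0 B0 by (simp add: add_divide_distrib[symmetric])
    ultimately have sh: "summable h" and vh: "suminf h = (A + B) powr p"
      by (simp_all add: sums_iff)
    have le: "\<bar>f k + g k\<bar> powr p \<le> h k" for k
      unfolding h_def by (rule abs_add_powr_le_split[OF p A0 B0])
    have ssum: "summable (\<lambda>k. \<bar>f k + g k\<bar> powr p)"
      by (rule summable_comparison_test'[OF sh, of 0]) (use le in auto)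
    then have "ellp_norm p (\<lambda>k. f k + g k) \<le> A + B"
      using ellp_norm_le_iff[OF _ p0, of _ "A + B"] A0 B0 vh suminf_le[OF le ssum sh]
      by (simp add: ellp_def)
    then show ?thesis using ssum by (simp add: ellp_def)
  qed
  then show "(\<lambda>k. f k + g k) \<in> ellp p" "ellp_norm p (\<lambda>k. f k + g k) \<le> ellp_norm p f + ellp_norm p g"
    unfolding A_def B_def by auto
qed

section \<open>The space of diagonal operators into \<open>\<ell>\<^sub>p\<close>\<close>

locale p_normed_ideal_space = normed_ideal_space +
  fixes p :: real
  assumes one_le_p: "1 \<le> p"
begin

abbreviation IDL :: "seq set" where
  "IDL \<equiv> diag_ops X N (ellp p) (ellp_norm p)"

abbreviation IDL_norm :: "seq \<Rightarrow> real" where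
  "IDL_norm \<equiv> diag_norm X N (ellp_norm p)"

lemma p_pos: "0 < p"
  using one_le_p by simp

lemma IDL_ellp: "\<sigma> \<in> IDL \<Longrightarrow> \<tau> \<in> X \<Longrightarrow> (\<lambda>k. \<sigma> k * \<tau> k) \<in> ellp p"
  unfolding diag_ops_def by blast

lemma IDL_norm_bdd:
  assumes "\<sigma> \<in> IDL"
  shows "bdd_above {ellp_norm p (\<lambda>k. \<sigma> k * \<tau> k) | \<tau>. \<tau> \<in> X \<and> N \<tau> \<le> 1}"
proof -
  obtain C where C: "\<forall>\<tau>\<in>X. ellp_norm p (\<lambda>k. \<sigma> k * \<tau> k) \<le> C * N \<tau>"
    using assms unfolding diag_ops_def by blast
  have "C * N \<tau> \<le> \<bar>C\<bar>" if "\<tau> \<in> X" "N \<tau> \<le> 1" for \<tau>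
    using that norm_nonneg[OF that(1)] mult_mono[of C "\<bar>C\<bar>" "N \<tau>" 1] by simp
  then show ?thesis using C by (intro bdd_aboveI[of _ "\<bar>C\<bar>"]) force
qed

lemma ellp_norm_le_IDL_norm:
  assumes "\<sigma> \<in> IDL" "\<tau> \<in> X" "N \<tau> \<le> 1"
  shows "ellp_norm p (\<lambda>k. \<sigma> k * \<tau> k) \<le> IDL_norm \<sigma>"
  unfolding diag_norm_def by (rule cSup_upper[OF _ IDL_norm_bdd[OF assms(1)]]) (use assms in auto)

lemma IDL_norm_le:
  "(\<And>\<tau>. \<tau> \<in> X \<Longrightarrow> N \<tau> \<le> 1 \<Longrightarrow> ellp_norm p (\<lambda>k. \<sigma> k * \<tau> k) \<le> C) \<Longrightarrow> IDL_norm \<sigma> \<le> C"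
  unfolding diag_norm_def by (rule cSup_least) (use zero_mem norm_zero in auto)

lemma IDL_norm_nonneg:
  assumes "\<sigma> \<in> IDL"
  shows "0 \<le> IDL_norm \<sigma>"
proof -
  have "ellp_norm p (\<lambda>k. \<sigma> k * 0) \<le> IDL_norm \<sigma>"
    using ellp_norm_le_IDL_norm[OF assms zero_mem] norm_zero by simp
  then show ?thesis using ellp_norm_nonneg order_trans by blast
qed

lemma ellp_norm_mult_le:
  assumes \<sigma>: "\<sigma> \<in> IDL" and \<tau>: "\<tau> \<in> X"
  shows "ellp_norm p (\<lambda>k. \<sigma> k * \<tau> k) \<le> IDL_norm \<sigma> * N \<tau>"
proof (cases "N \<tau> = 0")
  case True
  then show ?thesis using norm_eq_zero_iff[OF \<tau>] ellp_zero[OF p_pos] by simp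
next
  case False
  define t where "t = 1 / N \<tau>"
  have t: "0 < t" "t * N \<tau> = 1" using False norm_nonneg[OF \<tau>] by (auto simp: t_def)
  have "N (\<lambda>k. t * \<tau> k) = 1" using norm_scale[OF \<tau>, of t] t by simp
  then have "ellp_norm p (\<lambda>k. \<sigma> k * (t * \<tau> k)) \<le> IDL_norm \<sigma>"
    using ellp_norm_le_IDL_norm[OF \<sigma> scale_mem[OF \<tau>]] by simp
  moreover have "ellp_norm p (\<lambda>k. \<sigma> k * (t * \<tau> k)) = t * ellp_norm p (\<lambda>k. \<sigma> k * \<tau> k)"
    using ellp_scale(2)[OF IDL_ellp[OF \<sigma> \<tau>] p_pos, of t] t by (simp add: ac_simps)
  ultimately have "N \<tau> * (t * ellp_norm p (\<lambda>k. \<sigma> k * \<tau> k)) \<le> N \<tau> * IDL_norm \<sigma>"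
    using norm_nonneg[OF \<tau>] by (simp add: mult_left_mono)
  moreover have "N \<tau> * (t * ellp_norm p (\<lambda>k. \<sigma> k * \<tau> k)) = ellp_norm p (\<lambda>k. \<sigma> k * \<tau> k)"
    by (metis t(2) mult.assoc mult.commute mult_1)
  ultimately show ?thesis by (simp add: mult.commute)
qed

lemma IDLI:
  assumes "\<And>\<tau>. \<tau> \<in> X \<Longrightarrow> (\<lambda>k. \<sigma> k * \<tau> k) \<in> ellp p \<and> ellp_norm p (\<lambda>k. \<sigma> k * \<tau> k) \<le> C * N \<tau>"
    and "0 \<le> C"
  shows "\<sigma> \<in> IDL" "IDL_norm \<sigma> \<le> C"
proof -
  show "\<sigma> \<in> IDL" unfolding diag_ops_def using assms(1) by blast
  show "IDL_norm \<sigma> \<le> C"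
  proof (rule IDL_norm_le)
    fix \<tau> assume "\<tau> \<in> X" "N \<tau> \<le> 1"
    then have "C * N \<tau> \<le> C" using assms(2) by (simp add: mult_left_le)
    then show "ellp_norm p (\<lambda>k. \<sigma> k * \<tau> k) \<le> C" using assms(1)[OF \<open>\<tau> \<in> X\<close>] by linarith
  qed
qed

lemma IDL_zero: "(\<lambda>k. 0) \<in> IDL" "IDL_norm (\<lambda>k. 0) = 0"
proof -
  have "(\<lambda>k. 0 * \<tau> k) \<in> ellp p \<and> ellp_norm p (\<lambda>k. 0 * \<tau> k) \<le> 0 * N \<tau>" for \<tau>
    using ellp_zero[OF p_pos] by simp
  from IDLI[OF this order_refl] have "(\<lambda>k. 0) \<in> IDL" and "IDL_norm (\<lambda>k. 0) \<le> 0" by auto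
  then show "(\<lambda>k. 0) \<in> IDL" "IDL_norm (\<lambda>k. 0) = 0" using IDL_norm_nonneg by (auto simp: antisym)
qed

lemma IDL_add:
  assumes x: "x \<in> IDL" and y: "y \<in> IDL"
  shows "(\<lambda>k. x k + y k) \<in> IDL" "IDL_norm (\<lambda>k. x k + y k) \<le> IDL_norm x + IDL_norm y"
proof -
  have "(\<lambda>k. (x k + y k) * \<tau> k) \<in> ellp p \<and>
      ellp_norm p (\<lambda>k. (x k + y k) * \<tau> k) \<le> (IDL_norm x + IDL_norm y) * N \<tau>"
    if \<tau>: "\<tau> \<in> X" for \<tau>
    using ellp_minkowski[OF IDL_ellp[OF x \<tau>] IDL_ellp[OF y \<tau>] one_le_p]
      ellp_norm_mult_le[OF x \<tau>] ellp_norm_mult_le[OF y \<tau>]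
    by (auto simp: algebra_simps)
  from IDLI[OF this add_nonneg_nonneg[OF IDL_norm_nonneg[OF x] IDL_norm_nonneg[OF y]]]
  show "(\<lambda>k. x k + y k) \<in> IDL" "IDL_norm (\<lambda>k. x k + y k) \<le> IDL_norm x + IDL_norm y" by auto
qed

lemma IDL_scale:
  assumes x: "x \<in> IDL"
  shows "(\<lambda>k. c * x k) \<in> IDL" "IDL_norm (\<lambda>k. c * x k) = \<bar>c\<bar> * IDL_norm x"
proof -
  have scaled: "ellp_norm p (\<lambda>k. c * x k * \<tau> k) = \<bar>c\<bar> * ellp_norm p (\<lambda>k. x k * \<tau> k)"
    "(\<lambda>k. c * x k * \<tau> k) \<in> ellp p" if "\<tau> \<in> X" for \<tau>
    using ellp_scale[OF IDL_ellp[OF x that] p_pos, of c] by (simp_all add: ac_simps)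
  then have "(\<lambda>k. c * x k * \<tau> k) \<in> ellp p \<and>
      ellp_norm p (\<lambda>k. c * x k * \<tau> k) \<le> (\<bar>c\<bar> * IDL_norm x) * N \<tau>" if "\<tau> \<in> X" for \<tau>
    using scaled[OF that] mult_left_mono[OF ellp_norm_mult_le[OF x that] abs_ge_zero[of c]]
    by (simp add: mult.assoc)
  from IDLI[OF this mult_nonneg_nonneg[OF abs_ge_zero IDL_norm_nonneg[OF x]]]
  have cx: "(\<lambda>k. c * x k) \<in> IDL" and le: "IDL_norm (\<lambda>k. c * x k) \<le> \<bar>c\<bar> * IDL_norm x" by auto
  then show "(\<lambda>k. c * x k) \<in> IDL" by simp
  have "\<bar>c\<bar> * IDL_norm x \<le> IDL_norm (\<lambda>k. c * x k)"
  proof (cases "c = 0")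
    case True
    then show ?thesis using IDL_norm_nonneg[OF cx] by simp
  next
    case False
    have "IDL_norm x \<le> IDL_norm (\<lambda>k. c * x k) / \<bar>c\<bar>"
    proof (rule IDL_norm_le)
      fix \<tau> assume "\<tau> \<in> X" "N \<tau> \<le> 1"
      then show "ellp_norm p (\<lambda>k. x k * \<tau> k) \<le> IDL_norm (\<lambda>k. c * x k) / \<bar>c\<bar>"
        using ellp_norm_le_IDL_norm[OF cx] scaled False by (simp add: field_simps)
    qed
    then show ?thesis using False by (simp add: field_simps)
  qed
  then show "IDL_norm (\<lambda>k. c * x k) = \<bar>c\<bar> * IDL_norm x" using le by simp
qed

lemma IDL_norm_eq_zero_iff:
  assumes x: "x \<in> IDL"
  shows "IDL_norm x = 0 \<longleftrightarrow> x = (\<lambda>k. 0)"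
proof
  assume "IDL_norm x = 0"
  then have "\<bar>x k\<bar> \<le> 0" for k
    using ellp_norm_mult_le[OF x unitvec_mem[of k]] ellp_unitvec[OF p_pos, of x k] norm_unitvec by simp
  then show "x = (\<lambda>k. 0)" by auto
qed (use IDL_zero in simp)

lemma IDL_mult_ellinf:
  assumes \<sigma>: "\<sigma> \<in> IDL" and \<alpha>: "\<alpha> \<in> ellinf"
  shows "(\<lambda>k. \<alpha> k * \<sigma> k) \<in> IDL" "IDL_norm (\<lambda>k. \<alpha> k * \<sigma> k) \<le> supnorm \<alpha> * IDL_norm \<sigma>"
proof -
  have sup: "0 \<le> supnorm \<alpha>" using abs_le_supnorm[OF \<alpha>, of 0] by simp
  have "(\<lambda>k. \<alpha> k * \<sigma> k * \<tau> k) \<in> ellp p \<and>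
      ellp_norm p (\<lambda>k. \<alpha> k * \<sigma> k * \<tau> k) \<le> (supnorm \<alpha> * IDL_norm \<sigma>) * N \<tau>"
    if \<tau>: "\<tau> \<in> X" for \<tau>
  proof -
    have le: "\<bar>\<alpha> k * \<sigma> k * \<tau> k\<bar> \<le> \<bar>supnorm \<alpha> * (\<sigma> k * \<tau> k)\<bar>" for k
      using mult_right_mono[OF abs_le_supnorm[OF \<alpha>, of k], of "\<bar>\<sigma> k * \<tau> k\<bar>"] sup
      by (simp add: abs_mult mult.assoc)
    note scaled = ellp_scale[OF IDL_ellp[OF \<sigma> \<tau>] p_pos, of "supnorm \<alpha>"]
    have "ellp_norm p (\<lambda>k. \<alpha> k * \<sigma> k * \<tau> k) \<le> supnorm \<alpha> * ellp_norm p (\<lambda>k. \<sigma> k * \<tau> k)"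
      using ellp_mono(2)[OF scaled(1) p_pos le] scaled(2) sup by simp
    also have "\<dots> \<le> supnorm \<alpha> * (IDL_norm \<sigma> * N \<tau>)"
      using ellp_norm_mult_le[OF \<sigma> \<tau>] sup by (rule mult_left_mono)
    finally show ?thesis using ellp_mono(1)[OF scaled(1) p_pos le] by (simp add: mult.assoc)
  qed
  from IDLI[OF this mult_nonneg_nonneg[OF sup IDL_norm_nonneg[OF \<sigma>]]]
  show "(\<lambda>k. \<alpha> k * \<sigma> k) \<in> IDL" "IDL_norm (\<lambda>k. \<alpha> k * \<sigma> k) \<le> supnorm \<alpha> * IDL_norm \<sigma>"
    by auto
qed

lemma unitvec_IDL: "unitvec k \<in> IDL" "IDL_norm (unitvec k) = 1"
proof -
  have "(\<lambda>j. unitvec k j * \<tau> j) \<in> ellp p \<and> ellp_norm p (\<lambda>j. unitvec k j * \<tau> j) \<le> 1 * N \<tau>"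
    if "\<tau> \<in> X" for \<tau>
    using ellp_unitvec[OF p_pos, of \<tau> k] abs_le_norm[OF that, of k] by (simp add: mult.commute)
  from IDLI[OF this zero_le_one]
  have u: "unitvec k \<in> IDL" and le: "IDL_norm (unitvec k) \<le> 1" by auto
  then show "unitvec k \<in> IDL" by simp
  have "ellp_norm p (\<lambda>j. unitvec k j * unitvec k j) = 1"
    using ellp_unitvec[OF p_pos, of "unitvec k" k] by (simp add: unitvec_def)
  then have "1 \<le> IDL_norm (unitvec k)"
    using ellp_norm_le_IDL_norm[OF u unitvec_mem[of k]] norm_unitvec by simp
  then show "IDL_norm (unitvec k) = 1" using le by simp
qed

lemma IDL_normed_ideal_space: "normed_ideal_space IDL IDL_norm"
proof
  show "normed_seq_space IDL IDL_norm"
    unfolding normed_seq_space_def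
    by (simp add: IDL_zero IDL_add IDL_scale IDL_norm_nonneg IDL_norm_eq_zero_iff)
  show "ellinf_ideal IDL IDL_norm"
    unfolding ellinf_ideal_def by (simp add: IDL_mult_ellinf)
qed (use unitvec_IDL in auto)

lemma IDL_p_normed_ideal_space: "p_normed_ideal_space IDL IDL_norm p"
  by (intro p_normed_ideal_space.intro IDL_normed_ideal_space p_normed_ideal_space_axioms.intro one_le_p)

interpretation dual: p_normed_ideal_space IDL IDL_norm p
  by (rule IDL_p_normed_ideal_space)

lemma IDL_fatou_bound:
  assumes bound: "\<And>n. IDL_norm (trunc n \<sigma>) \<le> C"
  shows "\<sigma> \<in> IDL" "IDL_norm \<sigma> \<le> C"
proof -
  have C: "0 \<le> C" using bound[of 0] dual.norm_nonneg[OF dual.trunc_mem, of 0 \<sigma>] by linarith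
  have "(\<lambda>k. \<sigma> k * \<tau> k) \<in> ellp p \<and> ellp_norm p (\<lambda>k. \<sigma> k * \<tau> k) \<le> C * N \<tau>"
    if \<tau>: "\<tau> \<in> X" for \<tau>
  proof -
    have CN: "0 \<le> C * N \<tau>" using C norm_nonneg[OF \<tau>] by simp
    have "(\<Sum>k<n. \<bar>\<sigma> k * \<tau> k\<bar> powr p) \<le> (C * N \<tau>) powr p" for n
    proof -
      have zero: "\<And>k. k \<ge> n \<Longrightarrow> trunc n \<sigma> k * \<tau> k = 0" by (simp add: trunc_def)
      have "(\<Sum>k<n. \<bar>\<sigma> k * \<tau> k\<bar> powr p) = (\<Sum>k. \<bar>trunc n \<sigma> k * \<tau> k\<bar> powr p)"
        using ellp_finite_support(2)[OF zero p_pos] by (simp add: trunc_def)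
      moreover have "ellp_norm p (\<lambda>k. trunc n \<sigma> k * \<tau> k) \<le> C * N \<tau>"
        using order_trans[OF ellp_norm_mult_le[OF dual.trunc_mem \<tau>]
            mult_right_mono[OF bound norm_nonneg[OF \<tau>]]] .
      ultimately show ?thesis
        using ellp_norm_le_iff[OF IDL_ellp[OF dual.trunc_mem \<tau>] p_pos CN] by simp
    qed
    from ellpI_partial_sums_bounded[OF this] show ?thesis
      using ellp_norm_le_iff[OF _ p_pos CN] by blast
  qed
  from IDLI[OF this C] show "\<sigma> \<in> IDL" "IDL_norm \<sigma> \<le> C" by auto
qed

lemma IDL_fatou: "fatou_property IDL IDL_norm"
  unfolding fatou_property_def
proof (intro conjI allI ballI)
  fix \<sigma>
  show "\<sigma> \<in> IDL \<longleftrightarrow> bdd_above (range (\<lambda>n. IDL_norm (trunc n \<sigma>)))"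
  proof
    assume "\<sigma> \<in> IDL"
    then show "bdd_above (range (\<lambda>n. IDL_norm (trunc n \<sigma>)))"
      using dual.norm_trunc_le by (intro bdd_aboveI2) auto
  next
    assume "bdd_above (range (\<lambda>n. IDL_norm (trunc n \<sigma>)))"
    then show "\<sigma> \<in> IDL" using IDL_fatou_bound(1) by (auto simp: bdd_above_def)
  qed
next
  fix \<sigma> assume \<sigma>: "\<sigma> \<in> IDL"
  have bdd: "bdd_above (range (\<lambda>n. IDL_norm (trunc n \<sigma>)))"
    using dual.norm_trunc_le[OF \<sigma>] by (intro bdd_aboveI2) auto
  show "IDL_norm \<sigma> = (SUP n. IDL_norm (trunc n \<sigma>))"
    using IDL_fatou_bound(2)[OF cSUP_upper[OF _ bdd]] cSUP_least[of UNIV] dual.norm_trunc_le[OF \<sigma>]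
    by (metis UNIV_I UNIV_not_empty antisym)
qed

lemma IDL_maximal: "maximal_seq_space IDL IDL_norm"
  by (rule dual.maximal_if_fatou[OF IDL_fatou])

lemma mem_bidual:
  assumes \<sigma>: "\<sigma> \<in> X"
  shows "\<sigma> \<in> dual.IDL" "dual.IDL_norm \<sigma> \<le> N \<sigma>"
proof -
  have "(\<lambda>k. \<sigma> k * \<tau> k) \<in> ellp p \<and> ellp_norm p (\<lambda>k. \<sigma> k * \<tau> k) \<le> N \<sigma> * IDL_norm \<tau>"
    if "\<tau> \<in> IDL" for \<tau>
    using IDL_ellp[OF that \<sigma>] ellp_norm_mult_le[OF that \<sigma>] by (simp add: mult.commute)
  from dual.IDLI[OF this norm_nonneg[OF \<sigma>]]
  show "\<sigma> \<in> dual.IDL" "dual.IDL_norm \<sigma> \<le> N \<sigma>" by auto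
qed

text \<open>The \<open>p\<close>-th power of \<open>\<parallel>(\<Sum>\<^sub>k \<bar>x\<^sub>k\<bar>\<^sup>p)\<^sup>1\<^sup>/\<^sup>p \<tau>\<parallel>\<^sub>p\<close> is \<open>\<Sum>\<^sub>k \<parallel>x\<^sub>k \<tau>\<parallel>\<^sub>p\<^sup>p\<close>.\<close>

lemma IDL_pconv_ineq: "pconv_ineq IDL IDL_norm p 1"
  unfolding pconv_ineq_def
proof (intro allI impI conjI)
  fix n and x :: "nat \<Rightarrow> seq" assume x: "\<forall>k<n. x k \<in> IDL"
  define y where "y j = (\<Sum>k<n. \<bar>x k j\<bar> powr p) powr (1 / p)" for j
  define D where "D = (\<Sum>k<n. IDL_norm (x k) powr p) powr (1 / p)"
  have "(\<lambda>j. y j * \<tau> j) \<in> ellp p \<and> ellp_norm p (\<lambda>j. y j * \<tau> j) \<le> D * N \<tau>" if \<tau>: "\<tau> \<in> X" for \<tau>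
  proof -
    have sk: "summable (\<lambda>j. \<bar>x k j * \<tau> j\<bar> powr p)" if "k < n" for k
      using IDL_ellp[of "x k" \<tau>] x that \<tau> unfolding ellp_def by blast
    have pw: "\<bar>y j * \<tau> j\<bar> powr p = (\<Sum>k<n. \<bar>x k j * \<tau> j\<bar> powr p)" for j
      unfolding y_def using p_pos
      by (simp add: abs_mult powr_mult powr_powr sum_nonneg sum_distrib_right)
    have sy: "summable (\<lambda>j. \<bar>y j * \<tau> j\<bar> powr p)"
      unfolding pw by (rule summable_sum) (use sk in auto)
    have "(\<Sum>j. \<bar>y j * \<tau> j\<bar> powr p) = (\<Sum>k<n. \<Sum>j. \<bar>x k j * \<tau> j\<bar> powr p)"
      unfolding pw by (rule suminf_sum) (use sk in auto)
    also have "\<dots> \<le> (\<Sum>k<n. IDL_norm (x k) powr p * N \<tau> powr p)"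
    proof (rule sum_mono)
      fix k assume "k \<in> {..<n}"
      then have xk: "x k \<in> IDL" using x by auto
      then have "(\<Sum>j. \<bar>x k j * \<tau> j\<bar> powr p) \<le> (IDL_norm (x k) * N \<tau>) powr p"
        using ellp_norm_mult_le[OF xk \<tau>] ellp_norm_le_iff[OF IDL_ellp[OF xk \<tau>] p_pos]
          IDL_norm_nonneg[OF xk] norm_nonneg[OF \<tau>] by simp
      then show "(\<Sum>j. \<bar>x k j * \<tau> j\<bar> powr p) \<le> IDL_norm (x k) powr p * N \<tau> powr p"
        using IDL_norm_nonneg[OF xk] norm_nonneg[OF \<tau>] by (simp add: powr_mult)
    qed
    also have "\<dots> = (D * N \<tau>) powr p"
      unfolding D_def using p_pos norm_nonneg[OF \<tau>]
      by (simp add: powr_mult powr_powr sum_distrib_right sum_nonneg)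
    finally show ?thesis
      using sy ellp_norm_le_iff[of _ p "D * N \<tau>"] p_pos norm_nonneg[OF \<tau>]
      by (simp add: ellp_def D_def)
  qed
  from IDLI[OF this] have "y \<in> IDL" "IDL_norm y \<le> D" by (auto simp: D_def)
  then show "(\<lambda>j. (\<Sum>k<n. \<bar>x k j\<bar> powr p) powr (1 / p)) \<in> IDL"
    "IDL_norm (\<lambda>j. (\<Sum>k<n. \<bar>x k j\<bar> powr p) powr (1 / p))
      \<le> 1 * (\<Sum>k<n. IDL_norm (x k) powr p) powr (1 / p)"
    unfolding y_def[abs_def] D_def by simp_all
qed

end

lemma pconv_ineq_equivalent_norm:
  assumes conv: "pconv_ineq S M p c" and c: "0 \<le> c" and p: "0 < p" and a: "0 < a" and b: "0 < b"
    and M_nonneg: "\<And>x. x \<in> S \<Longrightarrow> 0 \<le> M x"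
    and equiv: "\<And>x. x \<in> S \<Longrightarrow> a * M' x \<le> M x \<and> M x \<le> b * M' x"
  shows "pconv_ineq S M' p (c * b / a)"
  unfolding pconv_ineq_def
proof (intro allI impI conjI)
  fix n and x :: "nat \<Rightarrow> seq" assume x: "\<forall>k<n. x k \<in> S"
  define y where "y j = (\<Sum>k<n. \<bar>x k j\<bar> powr p) powr (1 / p)" for j
  define Z where "Z = (\<Sum>k<n. M' (x k) powr p) powr (1 / p)"
  have y: "y \<in> S" "M y \<le> c * (\<Sum>k<n. M (x k) powr p) powr (1 / p)"
    using conv x unfolding pconv_ineq_def y_def by blast+
  then show "(\<lambda>j. (\<Sum>k<n. \<bar>x k j\<bar> powr p) powr (1 / p)) \<in> S" unfolding y_def by simp
  have M: "0 \<le> M (x k)" "M (x k) \<le> b * M' (x k)" if "k < n" for k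
    using equiv[of "x k"] M_nonneg[of "x k"] x that by auto
  then have M': "0 \<le> M' (x k)" if "k < n" for k
    using that b order_trans zero_le_mult_iff by (metis not_le)
  have "(\<Sum>k<n. M (x k) powr p) \<le> b powr p * (\<Sum>k<n. M' (x k) powr p)"
    unfolding sum_distrib_left using M M' b p
    by (intro sum_mono) (auto simp: powr_mult[symmetric] powr_mono2)
  then have "(\<Sum>k<n. M (x k) powr p) powr (1 / p) \<le> (b powr p * (\<Sum>k<n. M' (x k) powr p)) powr (1 / p)"
    using p by (intro powr_mono2) (auto intro: sum_nonneg)
  also have "\<dots> = b * Z"
    unfolding Z_def using b p by (simp add: powr_mult powr_powr sum_nonneg)
  finally have "(\<Sum>k<n. M (x k) powr p) powr (1 / p) \<le> b * Z" .
  then have "c * (\<Sum>k<n. M (x k) powr p) powr (1 / p) \<le> c * (b * Z)"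
    using c by (rule mult_left_mono)
  then have "a * M' y \<le> c * (b * Z)"
    using equiv[OF y(1)] y(2) by linarith
  then show "M' (\<lambda>j. (\<Sum>k<n. \<bar>x k j\<bar> powr p) powr (1 / p)) \<le> c * b / a * Z"
    using a unfolding y_def[abs_def] by (simp add: field_simps)
qed

section \<open>A finite-dimensional Hahn--Banach theorem\<close>

definition sublinear :: "(seq \<Rightarrow> real) \<Rightarrow> bool" where
  "sublinear q \<longleftrightarrow> (\<forall>u v. q (\<lambda>k. u k + v k) \<le> q u + q v) \<and>
     (\<forall>t u. t \<ge> 0 \<longrightarrow> q (\<lambda>k. t * u k) = t * q u)"

lemma sublinear_add: "sublinear q \<Longrightarrow> q (\<lambda>k. u k + v k) \<le> q u + q v"
  unfolding sublinear_def by blast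

lemma sublinear_scale: "sublinear q \<Longrightarrow> t \<ge> 0 \<Longrightarrow> q (\<lambda>k. t * u k) = t * q u"
  unfolding sublinear_def by blast

lemma sublinear_zero: "sublinear q \<Longrightarrow> q (\<lambda>k. 0) = 0"
  using sublinear_scale[of q 0 "\<lambda>k. 0"] by simp

lemma sublinear_scale_ge:
  assumes q: "sublinear q"
  shows "t * q u \<le> q (\<lambda>k. t * u k)"
proof (cases "t \<ge> 0")
  case True
  then show ?thesis using sublinear_scale[OF q] by simp
next
  case False
  have "0 \<le> q u + q (\<lambda>k. - u k)"
    using sublinear_add[OF q, of u "\<lambda>k. - u k"] sublinear_zero[OF q] by simp
  moreover have "q (\<lambda>k. t * u k) = (- t) * q (\<lambda>k. - u k)"
    using sublinear_scale[OF q, of "- t" "\<lambda>k. - u k"] False by simp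
  ultimately show ?thesis
    using False mult_nonneg_nonneg[of "- t" "q u + q (\<lambda>k. - u k)"] by (simp add: algebra_simps)
qed

text \<open>The device of the one-step extension in the Hahn--Banach theorem: a linear functional
  below \<open>sublinear_along q d\<close> is below \<open>q\<close> and takes the value \<open>q d\<close> at \<open>d\<close>.\<close>

definition sublinear_along :: "(seq \<Rightarrow> real) \<Rightarrow> seq \<Rightarrow> seq \<Rightarrow> real" where
  "sublinear_along q d u = (INF t. q (\<lambda>k. u k + t * d k) - t * q d)"

lemma sublinear_along_bdd:
  assumes q: "sublinear q"
  shows "bdd_below (range (\<lambda>t. q (\<lambda>k. u k + t * d k) - t * q d))"
proof (rule bdd_belowI2)
  fix t
  have "q (\<lambda>k. t * d k) \<le> q (\<lambda>k. u k + t * d k) + q (\<lambda>k. - u k)"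
    using sublinear_add[OF q, of "\<lambda>k. u k + t * d k" "\<lambda>k. - u k"] by simp
  then show "- q (\<lambda>k. - u k) \<le> q (\<lambda>k. u k + t * d k) - t * q d"
    using sublinear_scale_ge[OF q, of t d] by linarith
qed

lemma sublinear_along_le: "sublinear q \<Longrightarrow> sublinear_along q d u \<le> q (\<lambda>k. u k + t * d k) - t * q d"
  unfolding sublinear_along_def by (rule cINF_lower[OF sublinear_along_bdd]) auto

lemma sublinear_along_greatest:
  "(\<And>t. C \<le> q (\<lambda>k. u k + t * d k) - t * q d) \<Longrightarrow> C \<le> sublinear_along q d u"
  unfolding sublinear_along_def by (rule cINF_greatest) auto

lemma sublinear_along_le_self: "sublinear q \<Longrightarrow> sublinear_along q d u \<le> q u"
  using sublinear_along_le[of q d u 0] by simp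

lemma sublinear_along_add:
  assumes q: "sublinear q"
  shows "sublinear_along q d (\<lambda>k. u k + v k) \<le> sublinear_along q d u + sublinear_along q d v"
proof -
  have "sublinear_along q d (\<lambda>k. u k + v k) - sublinear_along q d u
      \<le> q (\<lambda>k. v k + s * d k) - s * q d" for s
  proof -
    have "sublinear_along q d (\<lambda>k. u k + v k) - (q (\<lambda>k. v k + s * d k) - s * q d)
        \<le> sublinear_along q d u"
    proof (rule sublinear_along_greatest)
      fix t
      have "sublinear_along q d (\<lambda>k. u k + v k)
          \<le> q (\<lambda>k. (u k + v k) + (t + s) * d k) - (t + s) * q d"
        by (rule sublinear_along_le[OF q])
      also have "q (\<lambda>k. (u k + v k) + (t + s) * d k) \<le> q (\<lambda>k. u k + t * d k) + q (\<lambda>k. v k + s * d k)"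
        using sublinear_add[OF q, of "\<lambda>k. u k + t * d k" "\<lambda>k. v k + s * d k"]
        by (simp add: algebra_simps)
      finally show "sublinear_along q d (\<lambda>k. u k + v k) - (q (\<lambda>k. v k + s * d k) - s * q d)
          \<le> q (\<lambda>k. u k + t * d k) - t * q d"
        by (simp add: algebra_simps)
    qed
    then show ?thesis by linarith
  qed
  then show ?thesis using sublinear_along_greatest[of _ q v d] by fastforce
qed

lemma sublinear_along_scale:
  assumes q: "sublinear q" and t: "0 < t"
  shows "sublinear_along q d (\<lambda>k. t * u k) = t * sublinear_along q d u"
proof (rule antisym)
  have "sublinear_along q d (\<lambda>k. t * u k) / t \<le> sublinear_along q d u"
  proof (rule sublinear_along_greatest)
    fix s
    have "sublinear_along q d (\<lambda>k. t * u k) \<le> q (\<lambda>k. t * u k + (t * s) * d k) - (t * s) * q d"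
      by (rule sublinear_along_le[OF q])
    also have "\<dots> = t * (q (\<lambda>k. u k + s * d k) - s * q d)"
      using sublinear_scale[OF q, of t "\<lambda>k. u k + s * d k"] t by (simp add: algebra_simps)
    finally show "sublinear_along q d (\<lambda>k. t * u k) / t \<le> q (\<lambda>k. u k + s * d k) - s * q d"
      using t by (simp add: field_simps mult.commute)
  qed
  then show "sublinear_along q d (\<lambda>k. t * u k) \<le> t * sublinear_along q d u"
    using t by (simp add: field_simps mult.commute)
  show "t * sublinear_along q d u \<le> sublinear_along q d (\<lambda>k. t * u k)"
  proof (rule sublinear_along_greatest)
    fix s
    have "t * sublinear_along q d u \<le> t * (q (\<lambda>k. u k + (s / t) * d k) - (s / t) * q d)"
      using mult_left_mono[OF sublinear_along_le[OF q, of d u "s / t"], of t] t by simp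
    also have "\<dots> = q (\<lambda>k. t * u k + s * d k) - s * q d"
      using sublinear_scale[OF q, of t "\<lambda>k. u k + (s / t) * d k"] t
      by (simp add: algebra_simps)
    finally show "t * sublinear_along q d u \<le> q (\<lambda>k. t * u k + s * d k) - s * q d" .
  qed
qed

lemma sublinear_sublinear_along:
  assumes q: "sublinear q"
  shows "sublinear (sublinear_along q d)"
  unfolding sublinear_def
proof (intro conjI allI impI)
  fix t :: real and u assume t: "0 \<le> t"
  show "sublinear_along q d (\<lambda>k. t * u k) = t * sublinear_along q d u"
  proof (cases "t = 0")
    case True
    have "0 \<le> sublinear_along q d (\<lambda>k. 0)"
      by (rule sublinear_along_greatest) (use sublinear_scale_ge[OF q] in simp)
    then show ?thesis
      using True sublinear_along_le_self[OF q, of d "\<lambda>k. 0"] sublinear_zero[OF q] by simp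
  qed (use sublinear_along_scale[OF q] t in simp)
qed (rule sublinear_along_add[OF q])

lemma sublinear_trunc: "sublinear q \<Longrightarrow> sublinear (\<lambda>u. q (trunc n u))"
proof -
  have "trunc n (\<lambda>k. u k + v k) = (\<lambda>k. trunc n u k + trunc n v k)"
    "trunc n (\<lambda>k. t * u k) = (\<lambda>k. t * trunc n u k)" for u v and t :: real
    by (auto simp: trunc_def)
  then show "sublinear q \<Longrightarrow> sublinear (\<lambda>u. q (trunc n u))"
    unfolding sublinear_def by presburger
qed

lemma trunc_trunc: "trunc n (trunc n u) = trunc n u"
  by (auto simp: trunc_def)

text \<open>Induction on the dimension: a functional below \<open>sublinear_along q (unitvec n)\<close> on the
  first \<open>n\<close> coordinates is extended by the value \<open>q (unitvec n)\<close> at the \<open>n\<close>-th coordinate.\<close>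

lemma finite_hahn_banach:
  assumes "sublinear q" and "\<And>u. q u = q (trunc n u)"
  shows "\<exists>w. \<forall>u. (\<Sum>k<n. w k * u k) \<le> q u"
  using assms
proof (induction n arbitrary: q)
  case 0
  then have "q u = 0" for u using sublinear_zero[of q] by (simp add: trunc_def)
  then show ?case by simp
next
  case (Suc n)
  note q = Suc.prems(1)
  define q' where "q' u = sublinear_along q (unitvec n) (trunc n u)" for u
  have "sublinear q'"
    unfolding q'_def by (rule sublinear_trunc[OF sublinear_sublinear_along[OF q]])
  moreover have "q' u = q' (trunc n u)" for u
    unfolding q'_def trunc_trunc ..
  ultimately obtain w where w: "\<And>u. (\<Sum>k<n. w k * u k) \<le> q' u"
    using Suc.IH by blast
  have "(\<Sum>k<Suc n. (w(n := q (unitvec n))) k * u k) \<le> q u" for u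
  proof -
    have "(\<Sum>k<Suc n. (w(n := q (unitvec n))) k * u k) = (\<Sum>k<n. w k * u k) + q (unitvec n) * u n"
      by (simp add: sum.lessThan_Suc)
    also have "\<dots> \<le> q' u + u n * q (unitvec n)"
      using w[of u] by simp
    also have "q' u \<le> q (\<lambda>k. trunc n u k + u n * unitvec n k) - u n * q (unitvec n)"
      unfolding q'_def by (rule sublinear_along_le[OF q])
    also have "(\<lambda>k. trunc n u k + u n * unitvec n k) = trunc (Suc n) u"
      by (auto simp: trunc_def unitvec_def less_Suc_eq)
    finally show ?thesis using Suc.prems(2)[of u] by simp
  qed
  then show ?case by blast
qed

lemma finite_hahn_banach_norming:
  assumes q: "sublinear q" and q_trunc: "\<And>u. q u = q (trunc n u)"
  obtains w where "\<And>u. (\<Sum>k<n. w k * u k) \<le> q u" and "(\<Sum>k<n. w k * u\<^sub>0 k) = q u\<^sub>0"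
proof -
  define q' where "q' = sublinear_along q u\<^sub>0"
  have "trunc n (\<lambda>k. u k + t * u\<^sub>0 k) = trunc n (\<lambda>k. trunc n u k + t * u\<^sub>0 k)" for u t
    by (auto simp: trunc_def)
  then have "q (\<lambda>k. u k + t * u\<^sub>0 k) = q (\<lambda>k. trunc n u k + t * u\<^sub>0 k)" for u t
    using q_trunc by metis
  then have "q' u = q' (trunc n u)" for u
    unfolding q'_def sublinear_along_def by simp
  then obtain w where w: "\<And>u. (\<Sum>k<n. w k * u k) \<le> q' u"
    using finite_hahn_banach[OF sublinear_sublinear_along[OF q]] unfolding q'_def by blast
  have le: "(\<Sum>k<n. w k * u k) \<le> q u" for u
    using w[of u] sublinear_along_le_self[OF q, of u\<^sub>0 u] unfolding q'_def by simp
  have "(\<Sum>k<n. w k * (- u\<^sub>0 k)) \<le> q (\<lambda>k. - u\<^sub>0 k + 1 * u\<^sub>0 k) - 1 * q u\<^sub>0"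
    using w[of "\<lambda>k. - u\<^sub>0 k"] sublinear_along_le[OF q] unfolding q'_def by (meson order_trans)
  then have "q u\<^sub>0 \<le> (\<Sum>k<n. w k * u\<^sub>0 k)"
    using sublinear_zero[OF q] by (simp add: sum_negf)
  then show ?thesis using that le[of u\<^sub>0] le by force
qed

section \<open>The \<open>p\<close>-concavification norm\<close>

lemma powr_add_le_twice:
  fixes a b r :: real
  assumes "0 \<le> a" "0 \<le> b" "0 < r" "r \<le> 1"
  shows "(a + b) powr r \<le> 2 * (a powr r + b powr r)"
proof -
  have "(a + b) powr r \<le> (2 * max a b) powr r" using assms by (intro powr_mono2) auto
  also have "\<dots> = 2 powr r * max a b powr r" using assms by (simp add: powr_mult)
  also have "\<dots> \<le> 2 * max a b powr r"
    using assms powr_le_cancel_iff[of 2 r 1] by (intro mult_right_mono) auto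
  also have "max a b powr r \<le> a powr r + b powr r" by (simp add: max_def)
  finally show ?thesis by simp
qed

lemma sum_lessThan_add: "(\<Sum>k<m + (n::nat). f k) = (\<Sum>k<m. f k) + (\<Sum>k<n. f (m + k))"
  by (induction n) (auto simp: sum.lessThan_Suc add.assoc)

context p_normed_ideal_space
begin

lemma abs_powr_powr_inverse: "(\<lambda>j. \<bar>\<bar>\<sigma> j\<bar> powr p\<bar> powr (1 / p)) = (\<lambda>j. \<bar>\<sigma> j\<bar>)"
  using p_pos by (simp add: powr_powr)

lemma Xp_iff: "u \<in> Xp X p \<longleftrightarrow> u \<in> ellinf \<and> (\<lambda>k. \<bar>u k\<bar> powr (1 / p)) \<in> X"
  unfolding Xp_def by blast

lemma Xp_zero: "(\<lambda>k. 0) \<in> Xp X p"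
  unfolding Xp_iff using zero_mem by (auto intro: ellinfI[of _ 0])

lemma Xp_add:
  assumes u: "u \<in> Xp X p" and v: "v \<in> Xp X p"
  shows "(\<lambda>k. u k + v k) \<in> Xp X p"
proof -
  obtain C D where C: "\<And>k. \<bar>u k\<bar> \<le> C" and D: "\<And>k. \<bar>v k\<bar> \<le> D"
    using u v ellinfE unfolding Xp_iff by metis
  have "\<bar>u k + v k\<bar> \<le> C + D" for k using C[of k] D[of k] by linarith
  then have "(\<lambda>k. u k + v k) \<in> ellinf" by (rule ellinfI)
  moreover have "(\<lambda>k. \<bar>u k + v k\<bar> powr (1 / p)) \<in> X"
  proof (rule solid(1))
    show "(\<lambda>k. 2 * (\<bar>u k\<bar> powr (1 / p) + \<bar>v k\<bar> powr (1 / p))) \<in> X"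
      using u v unfolding Xp_iff by (intro scale_mem add_mem) auto
    fix k
    have "\<bar>u k + v k\<bar> powr (1 / p) \<le> (\<bar>u k\<bar> + \<bar>v k\<bar>) powr (1 / p)"
      using p_pos by (intro powr_mono2) auto
    also have "\<dots> \<le> 2 * (\<bar>u k\<bar> powr (1 / p) + \<bar>v k\<bar> powr (1 / p))"
      using p_pos one_le_p by (intro powr_add_le_twice) auto
    finally show "\<bar>\<bar>u k + v k\<bar> powr (1 / p)\<bar> \<le> \<bar>2 * (\<bar>u k\<bar> powr (1 / p) + \<bar>v k\<bar> powr (1 / p))\<bar>"
      by simp
  qed
  ultimately show ?thesis unfolding Xp_iff by blast
qed

lemma Xp_scale:
  assumes u: "u \<in> Xp X p"
  shows "(\<lambda>k. a * u k) \<in> Xp X p"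
proof -
  obtain C where "\<And>k. \<bar>u k\<bar> \<le> C" using u ellinfE unfolding Xp_iff by metis
  then have "(\<lambda>k. a * u k) \<in> ellinf"
    by (intro ellinfI[of _ "\<bar>a\<bar> * C"]) (simp add: abs_mult mult_left_mono)
  moreover have "(\<lambda>k. \<bar>a\<bar> powr (1 / p) * \<bar>u k\<bar> powr (1 / p)) \<in> X"
    using u unfolding Xp_iff by (intro scale_mem) auto
  ultimately show ?thesis unfolding Xp_iff by (simp add: abs_mult powr_mult)
qed

lemma Xp_trunc: "trunc n u \<in> Xp X p"
proof -
  have "\<bar>trunc n u k\<bar> \<le> (\<Sum>j<n. \<bar>u j\<bar>)" for k
    by (cases "k < n") (auto simp: trunc_def intro: member_le_sum)
  moreover have "(\<lambda>k. \<bar>trunc n u k\<bar> powr (1 / p)) = trunc n (\<lambda>k. \<bar>u k\<bar> powr (1 / p))"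
    by (auto simp: trunc_def)
  ultimately show ?thesis unfolding Xp_iff using ellinfI trunc_mem by metis
qed

lemma Xp_abs_powr:
  assumes \<sigma>: "\<sigma> \<in> X"
  shows "(\<lambda>k. \<bar>\<sigma> k\<bar> powr p) \<in> Xp X p"
proof -
  have "(\<lambda>k. \<bar>\<sigma> k\<bar> powr p) \<in> ellinf"
    by (rule ellinfI[of _ "N \<sigma> powr p"]) (use abs_le_norm[OF \<sigma>] p_pos in \<open>auto intro: powr_mono2\<close>)
  then show ?thesis unfolding Xp_iff abs_powr_powr_inverse using abs_mem[OF \<sigma>] by blast
qed

text \<open>Apply the triangle inequality of the norm on \<open>X\<^sub>p\<close> to \<open>\<Sum>\<^sub>k \<bar>x\<^sub>k\<bar>\<^sup>p\<close>.\<close>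

lemma pconv_ineq_if_concavification_norm:
  assumes Np: "normed_seq_space (Xp X p) Np" and c: "c > 0"
    and bounds: "\<forall>\<sigma>\<in>X. (1 / c) * N \<sigma> \<le> Np (\<lambda>k. \<bar>\<sigma> k\<bar> powr p) powr (1 / p) \<and>
                    Np (\<lambda>k. \<bar>\<sigma> k\<bar> powr p) powr (1 / p) \<le> N \<sigma>"
  shows "pconv_ineq X N p c"
  unfolding pconv_ineq_def
proof (intro allI impI conjI)
  fix n and x :: "nat \<Rightarrow> seq" assume x: "\<forall>k<n. x k \<in> X"
  define \<tau> where "\<tau> j = (\<Sum>k<n. \<bar>x k j\<bar> powr p)" for j
  define y where "y j = \<tau> j powr (1 / p)" for j
  have Np_nonneg: "0 \<le> Np v" if "v \<in> Xp X p" for v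
    using Np that unfolding normed_seq_space_def by blast
  have xp: "(\<lambda>j. \<bar>x k j\<bar> powr p) \<in> Xp X p" if "k < n" for k
    using Xp_abs_powr x that by blast
  have \<tau>: "\<tau> \<in> Xp X p" "Np \<tau> \<le> (\<Sum>k<n. Np (\<lambda>j. \<bar>x k j\<bar> powr p))"
    unfolding \<tau>_def[abs_def] using normed_seq_space_sum[OF Np xp] by auto
  have \<tau>_nonneg: "0 \<le> \<tau> j" for j unfolding \<tau>_def by (intro sum_nonneg) auto
  then have y: "y \<in> X" using \<tau>(1) unfolding Xp_iff y_def[abs_def] by simp
  then show "(\<lambda>j. (\<Sum>k<n. \<bar>x k j\<bar> powr p) powr (1 / p)) \<in> X"
    unfolding y_def[abs_def] \<tau>_def .
  have "Np (\<lambda>j. \<bar>x k j\<bar> powr p) \<le> N (x k) powr p" if "k < n" for k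
    using bounds x that powr_inverse_le_iff[OF p_pos Np_nonneg[OF xp] norm_nonneg] by blast
  then have "(\<Sum>k<n. Np (\<lambda>j. \<bar>x k j\<bar> powr p)) \<le> (\<Sum>k<n. N (x k) powr p)"
    by (intro sum_mono) auto
  then have Np_\<tau>: "Np \<tau> \<le> (\<Sum>k<n. N (x k) powr p)" using \<tau>(2) by linarith
  have "(\<lambda>k. \<bar>y k\<bar> powr p) = \<tau>"
    using \<tau>_nonneg p_pos by (auto simp: y_def powr_powr)
  then have "(1 / c) * N y \<le> Np \<tau> powr (1 / p)" using bounds y by metis
  also have "\<dots> \<le> (\<Sum>k<n. N (x k) powr p) powr (1 / p)"
    using Np_\<tau> Np_nonneg[OF \<tau>(1)] p_pos by (intro powr_mono2) auto
  finally have "(1 / c) * N y \<le> (\<Sum>k<n. N (x k) powr p) powr (1 / p)" .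
  then show "N (\<lambda>j. (\<Sum>k<n. \<bar>x k j\<bar> powr p) powr (1 / p)) \<le> c * (\<Sum>k<n. N (x k) powr p) powr (1 / p)"
    using c unfolding y_def[abs_def] \<tau>_def by (simp add: field_simps)
qed

end

locale p_convex_normed_ideal_space = p_normed_ideal_space +
  fixes c :: real
  assumes c_pos: "0 < c" and pconv: "pconv_ineq X N p c"
begin

definition p_cover :: "seq \<Rightarrow> nat \<Rightarrow> (nat \<Rightarrow> seq) \<Rightarrow> bool" where
  "p_cover u m x \<longleftrightarrow> (\<forall>k<m. x k \<in> X) \<and> (\<forall>j. \<bar>u j\<bar> \<le> (\<Sum>k<m. \<bar>x k j\<bar> powr p))"

definition cover_costs :: "seq \<Rightarrow> real set" where
  "cover_costs u = {(\<Sum>k<m. N (x k) powr p) | m x. p_cover u m x}"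

definition concav_norm :: "seq \<Rightarrow> real" where
  "concav_norm u = Inf (cover_costs u)"

lemma concav_norm_le: "s \<in> cover_costs u \<Longrightarrow> concav_norm u \<le> s"
  unfolding concav_norm_def cover_costs_def
  by (rule cInf_lower, assumption, rule bdd_belowI[of _ 0]) (auto intro: sum_nonneg)

lemma concav_norm_greatest:
  "cover_costs u \<noteq> {} \<Longrightarrow> (\<And>s. s \<in> cover_costs u \<Longrightarrow> C \<le> s) \<Longrightarrow> C \<le> concav_norm u"
  unfolding concav_norm_def by (rule cInf_greatest)

lemma trivial_cover_cost: "u \<in> Xp X p \<Longrightarrow> N (\<lambda>j. \<bar>u j\<bar> powr (1 / p)) powr p \<in> cover_costs u"
proof -
  assume u: "u \<in> Xp X p"
  have "p_cover u 1 (\<lambda>k j. \<bar>u j\<bar> powr (1 / p))"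
    unfolding p_cover_def using u p_pos unfolding Xp_iff by (auto simp: powr_powr)
  then show ?thesis unfolding cover_costs_def by force
qed

lemma cover_costs_nonempty: "u \<in> Xp X p \<Longrightarrow> cover_costs u \<noteq> {}"
  using trivial_cover_cost by blast

lemma concav_norm_le_trivial: "u \<in> Xp X p \<Longrightarrow> concav_norm u \<le> N (\<lambda>j. \<bar>u j\<bar> powr (1 / p)) powr p"
  using concav_norm_le trivial_cover_cost by blast

text \<open>This is where \<open>p\<close>-convexity enters: it bounds the cost of every cover from below.\<close>

lemma cover_cost_ge:
  assumes cover: "p_cover u m x"
  shows "(N (\<lambda>j. \<bar>u j\<bar> powr (1 / p)) / c) powr p \<le> (\<Sum>k<m. N (x k) powr p)"
proof -
  define y where "y j = (\<Sum>k<m. \<bar>x k j\<bar> powr p) powr (1 / p)" for j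
  have y: "y \<in> X" "N y \<le> c * (\<Sum>k<m. N (x k) powr p) powr (1 / p)"
    using pconv cover unfolding pconv_ineq_def p_cover_def y_def by blast+
  have "\<bar>\<bar>u j\<bar> powr (1 / p)\<bar> \<le> \<bar>y j\<bar>" for j
    using cover p_pos unfolding y_def p_cover_def by (simp add: powr_mono2)
  from solid[OF y(1) this]
  have u: "(\<lambda>j. \<bar>u j\<bar> powr (1 / p)) \<in> X"
    and "N (\<lambda>j. \<bar>u j\<bar> powr (1 / p)) / c \<le> (\<Sum>k<m. N (x k) powr p) powr (1 / p)"
    using y(2) c_pos by (auto simp: field_simps mult.commute)
  moreover have "0 \<le> (\<Sum>k<m. N (x k) powr p)" by (intro sum_nonneg) simp
  moreover have "0 \<le> N (\<lambda>j. \<bar>u j\<bar> powr (1 / p)) / c" using norm_nonneg[OF u] c_pos by simp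
  ultimately show ?thesis using powr_inverse_ge_iff[OF p_pos] by blast
qed

lemma concav_norm_ge: "u \<in> Xp X p \<Longrightarrow> (N (\<lambda>j. \<bar>u j\<bar> powr (1 / p)) / c) powr p \<le> concav_norm u"
  by (rule concav_norm_greatest[OF cover_costs_nonempty]) (auto simp: cover_costs_def cover_cost_ge)

lemma concav_norm_nonneg: "u \<in> Xp X p \<Longrightarrow> 0 \<le> concav_norm u"
  using concav_norm_ge[of u] by (meson order_trans powr_ge_zero)

lemma concav_norm_mono:
  assumes v: "v \<in> Xp X p" and le: "\<And>k. \<bar>u k\<bar> \<le> \<bar>v k\<bar>"
  shows "concav_norm u \<le> concav_norm v"
proof (rule concav_norm_greatest[OF cover_costs_nonempty[OF v]])
  fix s assume "s \<in> cover_costs v"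
  then obtain m x where s: "s = (\<Sum>k<m. N (x k) powr p)" and "p_cover v m x"
    unfolding cover_costs_def by blast
  then have "p_cover u m x" using le unfolding p_cover_def by (meson order_trans)
  then show "concav_norm u \<le> s" unfolding s by (intro concav_norm_le) (auto simp: cover_costs_def)
qed

lemma cover_costs_add:
  assumes s: "s \<in> cover_costs u" and t: "t \<in> cover_costs v"
  shows "s + t \<in> cover_costs (\<lambda>k. u k + v k)"
proof -
  obtain m x where s_eq: "s = (\<Sum>k<m. N (x k) powr p)" and x: "p_cover u m x"
    using s unfolding cover_costs_def by blast
  obtain n y where t_eq: "t = (\<Sum>k<n. N (y k) powr p)" and y: "p_cover v n y"
    using t unfolding cover_costs_def by blast
  define z where "z k = (if k < m then x k else y (k - m))" for k
  have split: "(\<Sum>k<m + n. f (z k)) = (\<Sum>k<m. f (x k)) + (\<Sum>k<n. f (y k))" for f :: "seq \<Rightarrow> real"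
    unfolding sum_lessThan_add z_def by simp
  have "p_cover (\<lambda>k. u k + v k) (m + n) z"
    unfolding p_cover_def
  proof (intro conjI allI impI)
    fix k assume "k < m + n"
    then show "z k \<in> X" using x y unfolding p_cover_def z_def by auto
  next
    fix j
    have "\<bar>u j + v j\<bar> \<le> (\<Sum>k<m. \<bar>x k j\<bar> powr p) + (\<Sum>k<n. \<bar>y k j\<bar> powr p)"
      using x y abs_triangle_ineq[of "u j" "v j"] unfolding p_cover_def by force
    then show "\<bar>u j + v j\<bar> \<le> (\<Sum>k<m + n. \<bar>z k j\<bar> powr p)"
      using split[of "\<lambda>w. \<bar>w j\<bar> powr p"] by simp
  qed
  moreover have "s + t = (\<Sum>k<m + n. N (z k) powr p)" using split[of "\<lambda>w. N w powr p"] s_eq t_eq by simp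
  ultimately show ?thesis unfolding cover_costs_def by blast
qed

lemma concav_norm_add:
  assumes u: "u \<in> Xp X p" and v: "v \<in> Xp X p"
  shows "concav_norm (\<lambda>k. u k + v k) \<le> concav_norm u + concav_norm v"
proof -
  have "concav_norm (\<lambda>k. u k + v k) - t \<le> concav_norm u" if t: "t \<in> cover_costs v" for t
  proof (rule concav_norm_greatest[OF cover_costs_nonempty[OF u]])
    fix s assume "s \<in> cover_costs u"
    then have "concav_norm (\<lambda>k. u k + v k) \<le> s + t" using cover_costs_add t concav_norm_le by blast
    then show "concav_norm (\<lambda>k. u k + v k) - t \<le> s" by simp
  qed
  then have "concav_norm (\<lambda>k. u k + v k) - concav_norm u \<le> concav_norm v"
    by (intro concav_norm_greatest[OF cover_costs_nonempty[OF v]]) force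
  then show ?thesis by simp
qed

lemma cover_costs_scale:
  assumes s: "s \<in> cover_costs u"
  shows "\<bar>a\<bar> * s \<in> cover_costs (\<lambda>k. a * u k)"
proof -
  obtain m x where s_eq: "s = (\<Sum>k<m. N (x k) powr p)" and x: "p_cover u m x"
    using s unfolding cover_costs_def by blast
  define t where "t = \<bar>a\<bar> powr (1 / p)"
  have t: "0 \<le> t" "\<And>y. 0 \<le> y \<Longrightarrow> (t * y) powr p = \<bar>a\<bar> * y powr p"
    using p_pos by (auto simp: t_def powr_mult powr_powr)
  have "p_cover (\<lambda>k. a * u k) m (\<lambda>k j. t * x k j)"
    unfolding p_cover_def
  proof (intro conjI allI impI)
    fix k assume "k < m" then show "(\<lambda>j. t * x k j) \<in> X"
      using x unfolding p_cover_def by (auto intro: scale_mem)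
  next
    fix j
    have "\<bar>a * u j\<bar> \<le> \<bar>a\<bar> * (\<Sum>k<m. \<bar>x k j\<bar> powr p)"
      using x unfolding p_cover_def by (simp add: abs_mult mult_left_mono)
    also have "\<dots> = (\<Sum>k<m. \<bar>t * x k j\<bar> powr p)"
      unfolding sum_distrib_left using t by (intro sum.cong) (auto simp: abs_mult)
    finally show "\<bar>a * u j\<bar> \<le> (\<Sum>k<m. \<bar>t * x k j\<bar> powr p)" .
  qed
  moreover have "N (\<lambda>j. t * x k j) powr p = \<bar>a\<bar> * N (x k) powr p" if "k < m" for k
    using x that t norm_scale[of "x k" t] norm_nonneg[of "x k"] unfolding p_cover_def by simp
  then have "\<bar>a\<bar> * s = (\<Sum>k<m. N (\<lambda>j. t * x k j) powr p)"
    unfolding s_eq sum_distrib_left by (intro sum.cong) auto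
  ultimately show ?thesis
    unfolding cover_costs_def by (intro CollectI exI[of _ m] exI[of _ "\<lambda>k j. t * x k j"]) simp
qed

lemma concav_norm_scale_le:
  assumes u: "u \<in> Xp X p" and a: "a \<noteq> 0"
  shows "concav_norm (\<lambda>k. a * u k) \<le> \<bar>a\<bar> * concav_norm u"
proof -
  have "concav_norm (\<lambda>k. a * u k) / \<bar>a\<bar> \<le> concav_norm u"
  proof (rule concav_norm_greatest[OF cover_costs_nonempty[OF u]])
    fix s assume "s \<in> cover_costs u"
    then have "concav_norm (\<lambda>k. a * u k) \<le> \<bar>a\<bar> * s" using cover_costs_scale concav_norm_le by blast
    then show "concav_norm (\<lambda>k. a * u k) / \<bar>a\<bar> \<le> s" using a by (simp add: field_simps mult.commute)
  qed
  then show ?thesis using a by (simp add: field_simps mult.commute)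
qed

lemma concav_norm_zero: "concav_norm (\<lambda>k. 0) = 0"
  using concav_norm_le[OF cover_costs_scale[of _ _ 0]] cover_costs_nonempty[OF Xp_zero]
    concav_norm_nonneg[OF Xp_zero] by fastforce

lemma concav_norm_scale:
  assumes u: "u \<in> Xp X p"
  shows "concav_norm (\<lambda>k. a * u k) = \<bar>a\<bar> * concav_norm u"
proof (cases "a = 0")
  case False
  have "concav_norm (\<lambda>k. (1 / a) * (a * u k)) \<le> \<bar>1 / a\<bar> * concav_norm (\<lambda>k. a * u k)"
    using concav_norm_scale_le[OF Xp_scale[OF u, of a], of "1 / a"] False by simp
  then have "\<bar>a\<bar> * concav_norm u \<le> concav_norm (\<lambda>k. a * u k)" using False by (simp add: field_simps)
  then show ?thesis using concav_norm_scale_le[OF u False] by simp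
qed (simp add: concav_norm_zero)

lemma concav_norm_eq_zero_iff:
  assumes u: "u \<in> Xp X p"
  shows "concav_norm u = 0 \<longleftrightarrow> u = (\<lambda>k. 0)"
proof
  assume "concav_norm u = 0"
  then have "(N (\<lambda>j. \<bar>u j\<bar> powr (1 / p)) / c) powr p \<le> 0" using concav_norm_ge[OF u] by simp
  then have "(N (\<lambda>j. \<bar>u j\<bar> powr (1 / p)) / c) powr p = 0" using powr_ge_zero antisym by blast
  then have "N (\<lambda>j. \<bar>u j\<bar> powr (1 / p)) = 0" using c_pos by simp
  then have "(\<lambda>j. \<bar>u j\<bar> powr (1 / p)) = (\<lambda>k. 0)" using norm_eq_zero_iff u unfolding Xp_iff by blast
  then show "u = (\<lambda>k. 0)" by (auto simp: fun_eq_iff dest: fun_cong)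
qed (simp add: concav_norm_zero)

lemma concav_norm_normed: "normed_seq_space (Xp X p) concav_norm"
  unfolding normed_seq_space_def
  by (simp add: Xp_zero Xp_add Xp_scale concav_norm_add concav_norm_scale concav_norm_nonneg
      concav_norm_eq_zero_iff)

lemma concav_norm_bounds:
  assumes \<sigma>: "\<sigma> \<in> X"
  shows "(1 / c) * N \<sigma> \<le> concav_norm (\<lambda>k. \<bar>\<sigma> k\<bar> powr p) powr (1 / p)"
    "concav_norm (\<lambda>k. \<bar>\<sigma> k\<bar> powr p) powr (1 / p) \<le> N \<sigma>"
proof -
  note u = Xp_abs_powr[OF \<sigma>]
  note nonneg = concav_norm_nonneg[OF u]
  have "concav_norm (\<lambda>k. \<bar>\<sigma> k\<bar> powr p) \<le> N \<sigma> powr p"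
    using concav_norm_le_trivial[OF u] unfolding abs_powr_powr_inverse norm_abs[OF \<sigma>] .
  then show "concav_norm (\<lambda>k. \<bar>\<sigma> k\<bar> powr p) powr (1 / p) \<le> N \<sigma>"
    using powr_inverse_le_iff[OF p_pos nonneg norm_nonneg[OF \<sigma>]] by simp
  have "(N \<sigma> / c) powr p \<le> concav_norm (\<lambda>k. \<bar>\<sigma> k\<bar> powr p)"
    using concav_norm_ge[OF u] unfolding abs_powr_powr_inverse norm_abs[OF \<sigma>] .
  then show "(1 / c) * N \<sigma> \<le> concav_norm (\<lambda>k. \<bar>\<sigma> k\<bar> powr p) powr (1 / p)"
    using powr_inverse_ge_iff[OF p_pos nonneg, of "N \<sigma> / c"] norm_nonneg[OF \<sigma>] c_pos by simp
qed

end

section \<open>\<open>X\<close> as a space of diagonal operators\<close>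

context p_convex_normed_ideal_space
begin

interpretation dual: p_normed_ideal_space IDL IDL_norm p
  by (rule IDL_p_normed_ideal_space)

lemma sublinear_concav_norm_trunc: "sublinear (\<lambda>u. concav_norm (trunc n u))"
proof -
  have "trunc n (\<lambda>k. u k + v k) = (\<lambda>k. trunc n u k + trunc n v k)"
    "trunc n (\<lambda>k. t * u k) = (\<lambda>k. t * trunc n u k)" for u v and t :: real
    by (auto simp: trunc_def)
  then show ?thesis
    unfolding sublinear_def using concav_norm_add[OF Xp_trunc Xp_trunc] concav_norm_scale[OF Xp_trunc]
    by simp
qed

lemma IDL_unit_ball_if_below_concav_norm:
  assumes w: "\<And>u. (\<Sum>k<n. w k * u k) \<le> concav_norm (trunc n u)"
  defines "\<tau> \<equiv> trunc n (\<lambda>k. \<bar>w k\<bar> powr (1 / p))"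
  shows "\<tau> \<in> IDL" "IDL_norm \<tau> \<le> 1"
proof -
  have zero: "\<And>k. k \<ge> n \<Longrightarrow> \<tau> k * x k = 0" for x by (simp add: \<tau>_def trunc_def)
  have "(\<lambda>k. \<tau> k * x k) \<in> ellp p \<and> ellp_norm p (\<lambda>k. \<tau> k * x k) \<le> 1 * N x" if x: "x \<in> X" for x
  proof -
    have zero_x: "\<And>k. k \<ge> n \<Longrightarrow> \<tau> k * x k = 0" by (rule zero)
    define v where "v k = (if w k \<ge> 0 then 1 else -1) * \<bar>x k\<bar> powr p" for k
    have "(\<Sum>k. \<bar>\<tau> k * x k\<bar> powr p) = (\<Sum>k<n. \<bar>\<tau> k * x k\<bar> powr p)"
      by (rule ellp_finite_support(2)[OF zero_x p_pos])
    also have "\<dots> = (\<Sum>k<n. w k * v k)"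
      using p_pos by (intro sum.cong) (auto simp: \<tau>_def trunc_def v_def abs_mult powr_mult powr_powr)
    also have "\<dots> \<le> concav_norm (trunc n v)" by (rule w)
    also have "\<dots> \<le> concav_norm (\<lambda>k. \<bar>x k\<bar> powr p)"
      by (rule concav_norm_mono[OF Xp_abs_powr[OF x]]) (auto simp: trunc_def v_def)
    also have "\<dots> \<le> N x powr p"
      using concav_norm_le_trivial[OF Xp_abs_powr[OF x]] unfolding abs_powr_powr_inverse norm_abs[OF x] .
    finally show ?thesis
      using ellp_finite_support(1)[OF zero_x p_pos] ellp_norm_le_iff[OF _ p_pos norm_nonneg[OF x]] by simp
  qed
  from IDLI[OF this zero_le_one] show "\<tau> \<in> IDL" "IDL_norm \<tau> \<le> 1" by auto
qed

text \<open>Hahn--Banach applied to the concavification norm on the first \<open>n\<close> coordinates gives a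
  functional \<open>w\<close> norming \<open>\<bar>\<rho>\<bar>\<^sup>p\<close>; then \<open>\<bar>w\<bar>\<^sup>1\<^sup>/\<^sup>p\<close> is the test element for \<open>D\<^sub>\<rho>\<close>.\<close>

lemma norm_le_bidual_norm_finite_support:
  assumes \<rho>: "\<rho> \<in> X" and zero: "\<And>k. k \<ge> n \<Longrightarrow> \<rho> k = 0"
  shows "N \<rho> \<le> c * dual.IDL_norm \<rho>"
proof -
  define u where "u k = \<bar>\<rho> k\<bar> powr p" for k
  have u: "u \<in> Xp X p" unfolding u_def[abs_def] by (rule Xp_abs_powr[OF \<rho>])
  have u_trunc: "trunc n u = u" using zero p_pos by (auto simp: trunc_def u_def fun_eq_iff)
  have "concav_norm (trunc n v) = concav_norm (trunc n (trunc n v))" for v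
    by (simp add: trunc_trunc)
  then obtain w where w: "\<And>v. (\<Sum>k<n. w k * v k) \<le> concav_norm (trunc n v)"
    and norming: "(\<Sum>k<n. w k * u k) = concav_norm (trunc n u)"
    using finite_hahn_banach_norming[OF sublinear_concav_norm_trunc, where u\<^sub>0 = u] by blast
  define \<tau> where "\<tau> = trunc n (\<lambda>k. \<bar>w k\<bar> powr (1 / p))"
  note \<tau> = IDL_unit_ball_if_below_concav_norm[OF w, folded \<tau>_def]
  have \<rho>\<tau>_zero: "\<And>k. k \<ge> n \<Longrightarrow> \<rho> k * \<tau> k = 0" using zero by simp
  note \<rho>_bidual = mem_bidual(1)[OF \<rho>]
  have "(N \<rho> / c) powr p \<le> concav_norm u"
    using concav_norm_ge[OF u] unfolding u_def abs_powr_powr_inverse norm_abs[OF \<rho>] .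
  also have "\<dots> = (\<Sum>k<n. w k * u k)" using norming u_trunc by simp
  also have "\<dots> \<le> (\<Sum>k<n. \<bar>\<rho> k * \<tau> k\<bar> powr p)"
    using p_pos by (intro sum_mono)
      (auto simp: \<tau>_def trunc_def u_def abs_mult powr_mult powr_powr mult.commute[of _ "\<bar>w _\<bar>"]
        intro: mult_right_mono)
  also have "\<dots> = (\<Sum>k. \<bar>\<rho> k * \<tau> k\<bar> powr p)"
    using ellp_finite_support(2)[OF \<rho>\<tau>_zero p_pos] by simp
  finally have "N \<rho> / c \<le> ellp_norm p (\<lambda>k. \<rho> k * \<tau> k)"
    using ellp_norm_ge_iff[OF dual.IDL_ellp[OF \<rho>_bidual \<tau>(1)] p_pos] norm_nonneg[OF \<rho>] c_pos by simp
  also have "\<dots> \<le> dual.IDL_norm \<rho>"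
    by (rule dual.ellp_norm_le_IDL_norm[OF \<rho>_bidual \<tau>])
  finally show ?thesis using c_pos by (simp add: field_simps mult.commute)
qed

lemma bidual_representation:
  assumes fatou: "fatou_property X N"
  shows "X = dual.IDL" "\<And>\<sigma>. \<sigma> \<in> X \<Longrightarrow> N \<sigma> \<le> c * dual.IDL_norm \<sigma>"
proof -
  interpret bidual: p_normed_ideal_space dual.IDL dual.IDL_norm p
    by (rule dual.IDL_p_normed_ideal_space)
  have "\<sigma> \<in> X \<and> N \<sigma> \<le> c * dual.IDL_norm \<sigma>" if \<sigma>: "\<sigma> \<in> dual.IDL" for \<sigma>
  proof -
    have "N (trunc n \<sigma>) \<le> c * dual.IDL_norm (trunc n \<sigma>)" for n
      by (rule norm_le_bidual_norm_finite_support[OF trunc_mem, of n]) (simp add: trunc_def)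
    also have "c * dual.IDL_norm (trunc n \<sigma>) \<le> c * dual.IDL_norm \<sigma>" for n
      using bidual.norm_trunc_le[OF \<sigma>] c_pos by simp
    finally show ?thesis using fatou_bound[OF fatou] by blast
  qed
  then show "X = dual.IDL" "\<And>\<sigma>. \<sigma> \<in> X \<Longrightarrow> N \<sigma> \<le> c * dual.IDL_norm \<sigma>"
    using mem_bidual(1) by blast+
qed

end

lemma p_normed_ideal_space_if_maximal:
  assumes "maximal_seq_space X N" "1 \<le> p"
  shows "p_normed_ideal_space X N p"
proof (intro p_normed_ideal_space.intro normed_ideal_space.intro p_normed_ideal_space_axioms.intro)
  show "normed_seq_space X N" using assms(1) unfolding maximal_seq_space_def banach_seq_space_def by blast
  show "ellinf_ideal X N" using assms(1) unfolding maximal_seq_space_iff by blast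
  have "ell1 \<subseteq> X" using assms(1) unfolding maximal_seq_space_def by (elim conjE)
  then show "unitvec k \<in> X" for k using unitvec_ell1 by blast
qed (use assms in \<open>auto simp: maximal_seq_space_def\<close>)

lemma fatou_if_maximal: "maximal_seq_space X N \<Longrightarrow> fatou_property X N"
  unfolding maximal_seq_space_iff by blast

lemma p_convex_iff_concavification_norm:
  assumes "1 \<le> p" and "maximal_seq_space X N"
  shows "p_convex X N p \<longleftrightarrow>
    (\<exists>Np c. normed_seq_space (Xp X p) Np \<and> c > 0 \<and>
       (\<forall>\<sigma>\<in>X. (1 / c) * N \<sigma> \<le> Np (\<lambda>k. \<bar>\<sigma> k\<bar> powr p) powr (1 / p) \<and>
                Np (\<lambda>k. \<bar>\<sigma> k\<bar> powr p) powr (1 / p) \<le> N \<sigma>))"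
proof
  assume "p_convex X N p"
  then obtain c where "0 < c" "pconv_ineq X N p c" unfolding p_convex_def by blast
  then interpret p_convex_normed_ideal_space X N p c
    using p_normed_ideal_space_if_maximal[OF assms(2,1)]
    by (intro p_convex_normed_ideal_space.intro p_convex_normed_ideal_space_axioms.intro)
  show "\<exists>Np c. normed_seq_space (Xp X p) Np \<and> c > 0 \<and>
      (\<forall>\<sigma>\<in>X. (1 / c) * N \<sigma> \<le> Np (\<lambda>k. \<bar>\<sigma> k\<bar> powr p) powr (1 / p) \<and>
               Np (\<lambda>k. \<bar>\<sigma> k\<bar> powr p) powr (1 / p) \<le> N \<sigma>)"
    using concav_norm_normed concav_norm_bounds c_pos by blast
next
  interpret p_normed_ideal_space X N p
    by (rule p_normed_ideal_space_if_maximal[OF assms(2,1)])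
  assume "\<exists>Np c. normed_seq_space (Xp X p) Np \<and> c > 0 \<and>
      (\<forall>\<sigma>\<in>X. (1 / c) * N \<sigma> \<le> Np (\<lambda>k. \<bar>\<sigma> k\<bar> powr p) powr (1 / p) \<and>
               Np (\<lambda>k. \<bar>\<sigma> k\<bar> powr p) powr (1 / p) \<le> N \<sigma>)"
  then show "p_convex X N p"
    unfolding p_convex_def using pconv_ineq_if_concavification_norm by blast
qed

lemma pconv_ineq_bidual:
  assumes "1 \<le> p" and "maximal_seq_space X N" and "0 < c" and "pconv_ineq X N p c"
  defines "Y \<equiv> diag_ops X N (ellp p) (ellp_norm p)" and "NY \<equiv> diag_norm X N (ellp_norm p)"
  shows "maximal_seq_space Y NY" "X = diag_ops Y NY (ellp p) (ellp_norm p)"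
    "\<And>\<sigma>. \<sigma> \<in> X \<Longrightarrow> N \<sigma> \<le> c * diag_norm Y NY (ellp_norm p) \<sigma>"
    "\<And>\<sigma>. \<sigma> \<in> X \<Longrightarrow> diag_norm Y NY (ellp_norm p) \<sigma> \<le> N \<sigma>"
proof -
  interpret p_convex_normed_ideal_space X N p c
    using p_normed_ideal_space_if_maximal[OF assms(2,1)] assms(3,4)
    by (intro p_convex_normed_ideal_space.intro p_convex_normed_ideal_space_axioms.intro)
  show "maximal_seq_space Y NY" unfolding Y_def NY_def by (rule IDL_maximal)
  show "X = diag_ops Y NY (ellp p) (ellp_norm p)"
    "\<And>\<sigma>. \<sigma> \<in> X \<Longrightarrow> N \<sigma> \<le> c * diag_norm Y NY (ellp_norm p) \<sigma>"
    unfolding Y_def NY_def using bidual_representation fatou_if_maximal[OF assms(2)] by blast+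
  show "\<And>\<sigma>. \<sigma> \<in> X \<Longrightarrow> diag_norm Y NY (ellp_norm p) \<sigma> \<le> N \<sigma>"
    unfolding Y_def NY_def by (rule mem_bidual(2))
qed

lemma p_convex_iff_diag_representation:
  assumes p: "1 \<le> p" and X: "maximal_seq_space X N"
  shows "p_convex X N p \<longleftrightarrow>
    (\<exists>Y NY. maximal_seq_space Y NY \<and> X = diag_ops Y NY (ellp p) (ellp_norm p) \<and>
       (\<exists>a b. a > 0 \<and> b > 0 \<and>
          (\<forall>\<sigma>\<in>X. a * N \<sigma> \<le> diag_norm Y NY (ellp_norm p) \<sigma> \<and>
                   diag_norm Y NY (ellp_norm p) \<sigma> \<le> b * N \<sigma>)))"
proof
  assume "p_convex X N p"
  then obtain c where c: "0 < c" "pconv_ineq X N p c" unfolding p_convex_def by blast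
  note bidual = pconv_ineq_bidual[OF p X c]
  have "\<forall>\<sigma>\<in>X. (1 / c) * N \<sigma> \<le> diag_norm (diag_ops X N (ellp p) (ellp_norm p))
      (diag_norm X N (ellp_norm p)) (ellp_norm p) \<sigma>"
    using bidual(3) c(1) by (simp add: field_simps mult.commute)
  with bidual(1,2,4) c(1)
  show "\<exists>Y NY. maximal_seq_space Y NY \<and> X = diag_ops Y NY (ellp p) (ellp_norm p) \<and>
      (\<exists>a b. a > 0 \<and> b > 0 \<and>
         (\<forall>\<sigma>\<in>X. a * N \<sigma> \<le> diag_norm Y NY (ellp_norm p) \<sigma> \<and>
                  diag_norm Y NY (ellp_norm p) \<sigma> \<le> b * N \<sigma>))"
    by (intro exI[of _ "diag_ops X N (ellp p) (ellp_norm p)"] exI[of _ "diag_norm X N (ellp_norm p)"]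
        conjI exI[of _ "1 / c"] exI[of _ 1]) auto
next
  assume "\<exists>Y NY. maximal_seq_space Y NY \<and> X = diag_ops Y NY (ellp p) (ellp_norm p) \<and>
      (\<exists>a b. a > 0 \<and> b > 0 \<and>
         (\<forall>\<sigma>\<in>X. a * N \<sigma> \<le> diag_norm Y NY (ellp_norm p) \<sigma> \<and>
                  diag_norm Y NY (ellp_norm p) \<sigma> \<le> b * N \<sigma>))"
  then obtain Y NY a b where Y: "maximal_seq_space Y NY" and X_eq: "X = diag_ops Y NY (ellp p) (ellp_norm p)"
    and ab: "a > 0" "b > 0"
    and equiv: "\<forall>\<sigma>\<in>X. a * N \<sigma> \<le> diag_norm Y NY (ellp_norm p) \<sigma> \<and> diag_norm Y NY (ellp_norm p) \<sigma> \<le> b * N \<sigma>"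
    by blast
  interpret Y: p_normed_ideal_space Y NY p
    by (rule p_normed_ideal_space_if_maximal[OF Y p])
  have "pconv_ineq X N p (1 * b / a)"
    unfolding X_eq
    by (rule pconv_ineq_equivalent_norm[OF Y.IDL_pconv_ineq _ Y.p_pos ab Y.IDL_norm_nonneg])
      (use equiv X_eq in auto)
  then show "p_convex X N p" unfolding p_convex_def using ab by (intro exI[of _ "b / a"]) simp
qed

lemma div_Inf_le:
  fixes x D :: real
  assumes "C \<noteq> {}" and "\<And>c. c \<in> C \<Longrightarrow> 0 < c" and "\<And>c. c \<in> C \<Longrightarrow> x \<le> c * D" and "0 \<le> x"
  shows "x / Inf C \<le> D"
proof -
  obtain c where c: "c \<in> C" using assms(1) by blast
  have D: "0 \<le> D"
  proof (rule ccontr)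
    assume "\<not> 0 \<le> D"
    then have "c * D < 0" using assms(2)[OF c] by (simp add: mult_pos_neg)
    then show False using assms(3)[OF c] assms(4) by linarith
  qed
  have Inf: "0 \<le> Inf C" using assms(1,2) by (intro cInf_greatest) (auto simp: less_imp_le)
  show ?thesis
  proof (cases "D = 0 \<or> Inf C = 0")
    case True
    then show ?thesis using D assms(3)[OF c] assms(4) by auto
  next
    case False
    then have "x / D \<le> Inf C" using D assms by (intro cInf_greatest) (auto simp: field_simps)
    then show ?thesis using False D Inf by (simp add: field_simps mult.commute)
  qed
qed

theorem proposition1p1:
  fixes X :: "seq set" and N :: "seq \<Rightarrow> real" and p :: real
  assumes "1 \<le> p" and "maximal_seq_space X N"
  shows "(p_convex X N p \<longleftrightarrow>
            (\<exists>Np c. normed_seq_space (Xp X p) Np \<and> c > 0 \<and>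
               (\<forall>\<sigma>\<in>X. (1 / c) * N \<sigma> \<le> Np (\<lambda>k. \<bar>\<sigma> k\<bar> powr p) powr (1 / p) \<and>
                        Np (\<lambda>k. \<bar>\<sigma> k\<bar> powr p) powr (1 / p) \<le> N \<sigma>)))
       \<and> (p_convex X N p \<longleftrightarrow>
            (\<exists>Y NY. maximal_seq_space Y NY \<and> X = diag_ops Y NY (ellp p) (ellp_norm p) \<and>
               (\<exists>a b. a > 0 \<and> b > 0 \<and>
                  (\<forall>\<sigma>\<in>X. a * N \<sigma> \<le> diag_norm Y NY (ellp_norm p) \<sigma> \<and>
                           diag_norm Y NY (ellp_norm p) \<sigma> \<le> b * N \<sigma>))))
       \<and> (p_convex X N p \<longrightarrow>
            (let Y = diag_ops X N (ellp p) (ellp_norm p);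
                 NY = diag_norm X N (ellp_norm p)
             in maximal_seq_space Y NY \<and> X = diag_ops Y NY (ellp p) (ellp_norm p) \<and>
                (\<forall>\<sigma>\<in>X. N \<sigma> / pconv_const X N p \<le> diag_norm Y NY (ellp_norm p) \<sigma> \<and>
                         diag_norm Y NY (ellp_norm p) \<sigma> \<le> N \<sigma>)))"
proof (intro conjI impI)
  interpret p_normed_ideal_space X N p
    by (rule p_normed_ideal_space_if_maximal[OF assms(2,1)])
  assume "p_convex X N p"
  then obtain c where c: "0 < c" "pconv_ineq X N p c" unfolding p_convex_def by blast
  note bidual = pconv_ineq_bidual[OF assms c]
  have "N \<sigma> / pconv_const X N p \<le> diag_norm (diag_ops X N (ellp p) (ellp_norm p))
      (diag_norm X N (ellp_norm p)) (ellp_norm p) \<sigma>" if "\<sigma> \<in> X" for \<sigma>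
    unfolding pconv_const_def using c pconv_ineq_bidual(3)[OF assms _ _ that] norm_nonneg[OF that]
    by (intro div_Inf_le) auto
  with bidual show "let Y = diag_ops X N (ellp p) (ellp_norm p); NY = diag_norm X N (ellp_norm p)
      in maximal_seq_space Y NY \<and> X = diag_ops Y NY (ellp p) (ellp_norm p) \<and>
         (\<forall>\<sigma>\<in>X. N \<sigma> / pconv_const X N p \<le> diag_norm Y NY (ellp_norm p) \<sigma> \<and>
                  diag_norm Y NY (ellp_norm p) \<sigma> \<le> N \<sigma>)"
    unfolding Let_def by blast
qed (use p_convex_iff_concavification_norm[OF assms] p_convex_iff_diag_representation[OF assms] in auto)

end
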